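(* Let $\mathcal U(p)=\int\frac{p(x)^2}{2}dx$. (a) On $\mathbb T^d$: for $p,q\in\mathcal P$, $$\mathrm D_{\mathrm T,\mathcal U}(p\|q)=\frac12\int_{\mathbb T^d}\Big(\Delta\Phi_p(x)+\frac{1}{\det\nabla^2\Phi_p(x)}-1-d\Big)q(x)^2\,dx .$$ (b) On $[0,1]$: for smooth strictly positive probability densities $p,q$ with inverse CDFs $F_p^{-1},F_q^{-1}$, $$\mathrm D_{\mathrm T,\mathcal U}(p\|q)=\frac12\int_0^1\Big(\frac{1}{(F_p^{-1})'(s)}-\frac{1}{(F_q^{-1})'(s)}\Big)^2(F_p^{-1})'(s)\,ds .$$
   Context: On $\mathbb T^d=\mathbb R^d/\mathbb Z^d$: $\mathcal P$ is the set of $C^\infty$ strictly positive probability densities; the optimal map from $q$ to $p$ is assumed to be $\nabla\Phi_p$ with $\Phi_p=\tfrac12|x|^2+\varphi_p$, $\varphi_p\in C^\infty(\mathbb T^d)$, $\nabla^2\Phi_p>0$, $p(\nabla\Phi_p(x))\det\nabla^2\Phi_p(x)=q(x)$. On $[0,1]$: the optimal map is $T=F_p^{-1}\circ F_q$ ($F_p,F_q$ the CDFs). In both settings the transport Bregman divergence of a smooth functional $\mathcal F$ with $L^2$ first variation $\frac{\delta\mathcal F}{\delta q}(q)$ (here equal to $q$) is $\mathrm D_{\mathrm T,\mathcal F}(p\|q)=\mathcal F(p)-\mathcal F(q)-\int\big(\nabla_x\tfrac{\delta\mathcal F}{\delta q}(q)(x),T(x)-x\big)q(x)dx$ with $T=\nabla\Phi_p$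 resp. $T=F_p^{-1}\circ F_q$. *)

theory Defs
  imports "HOL-Analysis.Analysis"
begin

coinductive smooth_Rn :: "('a::euclidean_space \<Rightarrow> real) \<Rightarrow> bool" where
  "(\<forall>x. f differentiable (at x)) \<Longrightarrow>
   (\<forall>v. smooth_Rn (\<lambda>x. frechet_derivative f (at x) v)) \<Longrightarrow> smooth_Rn f"

text \<open>C-infinity on a set S (one-sided derivatives at boundary points of an interval).\<close>
coinductive smooth_on_real :: "real set \<Rightarrow> (real \<Rightarrow> real) \<Rightarrow> bool" for S where
  "(\<forall>x\<in>S. f differentiable (at x within S)) \<Longrightarrow>
   smooth_on_real S (\<lambda>x. vector_derivative f (at x within S)) \<Longrightarrow> smooth_on_real S f"

definition unit_cube :: "(real^'n) set" where
  "unit_cube = cbox 0 One"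

definition Zn_periodic :: "(real^'n \<Rightarrow> 'b) \<Rightarrow> bool" where
  "Zn_periodic f \<longleftrightarrow> (\<forall>x k. (\<forall>i. k $ i \<in> \<int>) \<longrightarrow> f (x + k) = f x)"

text \<open>The set P: smooth strictly positive probability densities on the torus,
  seen as Z^d-periodic functions on R^d, normalised on a fundamental cell.\<close>
definition torus_density :: "(real^'n \<Rightarrow> real) \<Rightarrow> bool" where
  "torus_density p \<longleftrightarrow> smooth_Rn p \<and> Zn_periodic p \<and> (\<forall>x. 0 < p x)
     \<and> integral unit_cube p = 1"

definition grad :: "(real^'n \<Rightarrow> real) \<Rightarrow> real^'n \<Rightarrow> real^'n" where
  "grad f x = (\<chi> i. frechet_derivative f (at x) (axis i 1))"

definition hess :: "(real^'n \<Rightarrow> real) \<Rightarrow> real^'n \<Rightarrow> real^'n^'n" where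
  "hess f x = (\<chi> i j. frechet_derivative (\<lambda>y. grad f y $ i) (at x) (axis j 1))"

definition laplacian :: "(real^'n \<Rightarrow> real) \<Rightarrow> real^'n \<Rightarrow> real" where
  "laplacian f x = (\<Sum>i\<in>UNIV. hess f x $ i $ i)"

definition U_torus :: "(real^'n \<Rightarrow> real) \<Rightarrow> real" where
  "U_torus p = integral unit_cube (\<lambda>x. (p x)^2 / 2)"

text \<open>Transport Bregman divergence on the torus of functional F with first
  variation dF, for the transport map T from q to p.\<close>
definition transport_bregman_torus ::
  "((real^'n \<Rightarrow> real) \<Rightarrow> real) \<Rightarrow> ((real^'n \<Rightarrow> real) \<Rightarrow> real^'n \<Rightarrow> real)
   \<Rightarrow> (real^'n \<Rightarrow> real) \<Rightarrow> (real^'n \<Rightarrow> real) \<Rightarrow> (real^'n \<Rightarrow> real^'n) \<Rightarrow> real" where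
  "transport_bregman_torus F dF p q T =
     F p - F q - integral unit_cube (\<lambda>x. (grad (dF q) x \<bullet> (T x - x)) * q x)"

definition interval_density :: "(real \<Rightarrow> real) \<Rightarrow> bool" where
  "interval_density p \<longleftrightarrow> smooth_on_real {0..1} p \<and> (\<forall>x\<in>{0..1}. 0 < p x)
     \<and> integral {0..1} p = 1"

definition cdf :: "(real \<Rightarrow> real) \<Rightarrow> real \<Rightarrow> real" where
  "cdf p x = integral {0..x} p"

definition inv_cdf :: "(real \<Rightarrow> real) \<Rightarrow> real \<Rightarrow> real" where
  "inv_cdf p = inv_into {0..1} (cdf p)"

definition U_int :: "(real \<Rightarrow> real) \<Rightarrow> real" where
  "U_int p = integral {0..1} (\<lambda>x. (p x)^2 / 2)"

definition transport_bregman_int ::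
  "((real \<Rightarrow> real) \<Rightarrow> real) \<Rightarrow> ((real \<Rightarrow> real) \<Rightarrow> real \<Rightarrow> real)
   \<Rightarrow> (real \<Rightarrow> real) \<Rightarrow> (real \<Rightarrow> real) \<Rightarrow> (real \<Rightarrow> real) \<Rightarrow> real" where
  "transport_bregman_int F dF p q T =
     F p - F q - integral {0..1}
        (\<lambda>x. vector_derivative (dF q) (at x within {0..1}) * (T x - x) * q x)"

end

theory Submission
  imports Defs
begin

(*
  (a) With \<Phi> = |x|\<^sup>2/2 + \<phi> and \<phi> periodic, the transport map \<nabla>\<Phi> = id + \<nabla>\<phi> commutes with integer
  translations and is injective (\<nabla>\<^sup>2\<Phi> > 0) and surjective (\<Phi> - \<langle>y, \<cdot>\<rangle> is coercive), so it induces a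
  diffeomorphism of the torus. Changing variables along it and using the Monge-Ampere equation gives
  U(p) = \<integral> q\<^sup>2 / (2 det \<nabla>\<^sup>2\<Phi>). The linear term is \<integral> q \<nabla>q\<cdot>\<nabla>\<phi> = -\<integral> q\<^sup>2 \<Delta>\<phi> / 2 by integration by parts
  on the torus, and \<Delta>\<Phi> = d + \<Delta>\<phi>.

  (b) Let T = F\<^sub>p\<^sup>-\<^sup>1 \<circ> F\<^sub>q, so T' = q / p(T) and T fixes 0 and 1. Substituting y = T x in U(p) and integrating
  q q' (T - x) by parts turns the divergence into \<integral> (p(T) - q)\<^sup>2 q / (2 p(T)); the substitution s = F\<^sub>q x
  gives the quantile form, since (F\<^sub>p\<^sup>-\<^sup>1)' = 1 / p(F\<^sub>p\<^sup>-\<^sup>1).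
*)

section \<open>Integrals of periodic functions over the unit cube\<close>

definition int_lattice :: "(real^'n) set" where
  "int_lattice = {k. \<forall>i. k$i \<in> \<int>}"

lemma int_lattice_diff: "a \<in> int_lattice \<Longrightarrow> b \<in> int_lattice \<Longrightarrow> a - b \<in> int_lattice"
  and int_lattice_uminus: "a \<in> int_lattice \<Longrightarrow> - a \<in> int_lattice"
  by (auto simp: int_lattice_def)

lemma Zn_periodic_iff: "Zn_periodic f \<longleftrightarrow> (\<forall>x. \<forall>k\<in>int_lattice. f (x + k) = f x)"
  unfolding Zn_periodic_def int_lattice_def by blast

lemma Zn_periodicD: "Zn_periodic f \<Longrightarrow> k \<in> int_lattice \<Longrightarrow> f (x + k) = f x"
  unfolding Zn_periodic_iff by blast

lemma Zn_periodicI: "(\<And>x k. k \<in> int_lattice \<Longrightarrow> f (x + k) = f x) \<Longrightarrow> Zn_periodic f"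
  unfolding Zn_periodic_iff by blast

lemma negligible_hyperplane_cart: "negligible {x::real^'n. x$i = c}"
proof -
  have "negligible {x::real^'n. x \<bullet> axis i 1 = c}"
    by (rule negligible_standard_hyperplane) (simp add: Basis_vec_def, blast)
  then show ?thesis by (simp add: cart_eq_inner_axis)
qed

lemma One_nth_cart: "(One::real^'n) $ i = 1"
  by (metis Cart_1 one_index)

lemma mem_unit_cube: "x \<in> (unit_cube :: (real^'n) set) \<longleftrightarrow> (\<forall>i. 0 \<le> x$i \<and> x$i \<le> 1)"
  unfolding unit_cube_def mem_box_cart One_nth_cart zero_index by simp

lemma compact_unit_cube: "compact (unit_cube :: (real^'n) set)"
  by (simp add: unit_cube_def)

lemma continuous_has_integral_unit_cube:
  "continuous_on UNIV (f :: real^'n \<Rightarrow> real) \<Longrightarrow> (f has_integral integral unit_cube f) unit_cube"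
  unfolding unit_cube_def
  by (rule integrable_integral, rule integrable_continuous, rule continuous_on_subset) auto

definition lattice_floor :: "real^'n \<Rightarrow> real^'n" where
  "lattice_floor x = (\<chi> i. of_int \<lfloor>x$i\<rfloor>)"

lemma lattice_floor_in_int_lattice: "lattice_floor x \<in> int_lattice"
  by (simp add: lattice_floor_def int_lattice_def)

lemma diff_lattice_floor_in_unit_cube: "x - lattice_floor x \<in> unit_cube"
  by (auto simp: mem_unit_cube lattice_floor_def) (smt (verit) real_of_int_floor_add_one_gt)

lemma periodic_eq_on_unit_cube:
  assumes "Zn_periodic f"
  obtains y where "y \<in> unit_cube" "f x = f y"
proof
  have "f x = f ((x - lattice_floor x) + lattice_floor x)" by simp
  also have "\<dots> = f (x - lattice_floor x)"
    using Zn_periodicD[OF assms lattice_floor_in_int_lattice] .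
  finally show "f x = f (x - lattice_floor x)" .
qed (rule diff_lattice_floor_in_unit_cube)

lemma periodic_continuous_bounded:
  fixes f :: "real^'n \<Rightarrow> real"
  assumes "continuous_on UNIV f" "Zn_periodic f"
  obtains B where "\<And>x. \<bar>f x\<bar> \<le> B"
proof -
  have "compact (f ` unit_cube)"
    using compact_continuous_image[OF continuous_on_subset[OF assms(1)] compact_unit_cube] by blast
  then obtain B where B: "\<And>y. y \<in> f ` unit_cube \<Longrightarrow> \<bar>y\<bar> \<le> B"
    using compact_imp_bounded bounded_iff by (metis real_norm_def)
  have "\<bar>f x\<bar> \<le> B" for x
    using periodic_eq_on_unit_cube[OF assms(2), of x] B by (metis image_eqI)
  then show ?thesis using that by blast
qed

lemma negligible_unit_cube_inter_translate:
  assumes "k \<in> int_lattice" "k \<noteq> 0"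
  shows "negligible (unit_cube \<inter> (+) k ` unit_cube :: (real^'n) set)"
proof -
  obtain i where i: "k$i \<noteq> 0" using assms(2) by (metis vec_eq_iff zero_index)
  obtain m where m: "k$i = of_int m"
    using assms(1) unfolding int_lattice_def by (metis Ints_cases mem_Collect_eq)
  have "unit_cube \<inter> (+) k ` unit_cube \<subseteq> {x::real^'n. x$i = 0} \<union> {x. x$i = 1}"
  proof
    fix x assume "x \<in> unit_cube \<inter> (+) k ` unit_cube"
    then obtain y where y: "y \<in> unit_cube" "x = k + y" "x \<in> unit_cube" by auto
    have bounds: "0 \<le> y$i" "y$i \<le> 1" "0 \<le> x$i" "x$i \<le> 1" using y by (auto simp: mem_unit_cube)
    have "x$i = y$i + of_int m" using y m by simp
    with bounds have "of_int m \<le> (1::real)" "of_int m \<ge> (-1::real)" by linarith+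
    then have "m = 1 \<or> m = -1" using i m by auto
    then show "x \<in> {x::real^'n. x$i = 0} \<union> {x. x$i = 1}"
      using bounds \<open>x$i = y$i + of_int m\<close> by auto
  qed
  moreover have "negligible ({x::real^'n. x$i = 0} \<union> {x. x$i = 1})"
    using negligible_hyperplane_cart by (intro negligible_Un) auto
  ultimately show ?thesis using negligible_subset by blast
qed

lemma translates_inter:
  fixes a b :: "'a::ab_group_add"
  shows "(+) a ` S \<inter> (+) b ` S = (+) a ` (S \<inter> (+) (b - a) ` S)"
proof -
  have "inj ((+) a)" by (simp add: inj_on_def)
  moreover have "(+) b ` S = (+) a ` (+) (b - a) ` S" by (simp add: image_image algebra_simps)
  ultimately show ?thesis by (simp add: image_Int)
qed

lemma translate_inter_translate:
  fixes k :: "'a::ab_group_add"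
  shows "(+) k ` (T \<inter> (+) (-k) ` S) = S \<inter> (+) k ` T"
proof -
  have "inj ((+) k)" by (simp add: inj_on_def)
  moreover have "(+) k ` (+) (-k) ` S = S" by (simp add: image_image)
  ultimately show ?thesis by (simp add: image_Int Int_commute)
qed

lemma finite_lattice_box: "finite {k \<in> int_lattice. \<forall>i. \<bar>(k::real^'n)$i\<bar> \<le> real N}"
proof -
  let ?I = "{x::real. x \<in> \<int> \<and> \<bar>x\<bar> \<le> real N}"
  have "?I \<subseteq> of_int ` {-int N..int N}"
  proof
    fix x :: real assume "x \<in> ?I"
    then obtain m where "x = of_int m" "\<bar>of_int m\<bar> \<le> real N" by (auto elim: Ints_cases)
    then show "x \<in> of_int ` {-int N..int N}" by (intro image_eqI[of _ _ m]) auto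
  qed
  then have "finite ?I" by (rule finite_subset) auto
  moreover have "{k \<in> int_lattice. \<forall>i. \<bar>(k::real^'n)$i\<bar> \<le> real N} \<subseteq> vec_lambda ` PiE UNIV (\<lambda>_. ?I)"
    by (auto simp: int_lattice_def image_iff intro!: bexI[where x="vec_nth _"])
  ultimately show ?thesis by (meson finite_PiE finite_imageI finite_subset finite)
qed

lemma continuous_absolutely_integrable_on_compact:
  fixes f :: "real^'n \<Rightarrow> real"
  assumes "continuous_on UNIV f" "compact S"
  shows "f absolutely_integrable_on S"
proof -
  obtain a where a: "S \<subseteq> cbox (-a) a"
    using bounded_subset_cbox_symmetric compact_imp_bounded[OF assms(2)] by blast
  have "f absolutely_integrable_on cbox (-a) a"
    by (rule absolutely_integrable_continuous) (use assms(1) continuous_on_subset in blast)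
  then show ?thesis
    using fmeasurableD[OF lmeasurable_compact[OF assms(2)]] by (rule set_integrable_subset[OF _ _ a])
qed

lemma continuous_has_integral_compact:
  fixes f :: "real^'n \<Rightarrow> real"
  assumes "continuous_on UNIV f" "compact S"
  shows "(f has_integral integral S f) S"
  using continuous_absolutely_integrable_on_compact[OF assms]
  by (auto simp: absolutely_integrable_on_def intro: integrable_integral)

lemma integral_change_of_variables_real:
  fixes f :: "real^'m::{finite,wellorder} \<Rightarrow> real"
  assumes S: "S \<in> sets lebesgue"
    and der: "\<And>x. x \<in> S \<Longrightarrow> (g has_derivative g' x) (at x within S)"
    and inj: "inj_on g S" and f: "f absolutely_integrable_on (g ` S)"
  shows "integral S (\<lambda>x. \<bar>det (matrix (g' x))\<bar> * f (g x)) = integral (g ` S) f"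
proof -
  define F :: "real^'m::{finite,wellorder} \<Rightarrow> real^1" where "F x = f x *\<^sub>R 1" for x
  have F: "F absolutely_integrable_on (g ` S)"
    unfolding F_def using absolutely_integrable_scaleR_right[OF f] .
  then have lhs: "(\<lambda>x. \<bar>det (matrix (g' x))\<bar> *\<^sub>R F (g x)) integrable_on S"
    and eq: "integral S (\<lambda>x. \<bar>det (matrix (g' x))\<bar> *\<^sub>R F (g x)) = integral (g ` S) F"
    using has_absolute_integral_change_of_variables[OF S der inj]
    by (auto simp: absolutely_integrable_on_def)
  have "F integrable_on (g ` S)" using F by (auto simp: absolutely_integrable_on_def)
  with lhs eq show ?thesis
    using integral_component_eq_cart[OF lhs] integral_component_eq_cart[of F "g ` S"]
    by (simp add: F_def)
qed

lemma integral_translation_image: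
  fixes f :: "real^'m::{finite,wellorder} \<Rightarrow> real"
  assumes f: "continuous_on UNIV f" and A: "compact A"
  shows "integral ((+) k ` A) f = integral A (\<lambda>x. f (k + x))"
proof -
  have "matrix (\<lambda>h::real^'m::{finite,wellorder}. h) = mat 1" using matrix_id_mat_1 by (simp add: id_def)
  moreover have "((+) k has_derivative (\<lambda>h. h)) (at x within A)" for x
    by (auto intro!: derivative_eq_intros)
  moreover have "f absolutely_integrable_on ((+) k ` A)"
    by (rule continuous_absolutely_integrable_on_compact[OF f compact_translation[OF A]])
  ultimately show ?thesis
    using integral_change_of_variables_real[of A "(+) k" "\<lambda>_ h. h"] lmeasurable_compact[OF A]
    by (simp add: fmeasurableD inj_on_def)
qed

lemma finite_lattice_translates_meeting:
  fixes S :: "(real^'n) set"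
  assumes "bounded S"
  shows "finite {k \<in> int_lattice. S \<inter> (+) k ` unit_cube \<noteq> {}}"
proof -
  obtain B where B: "\<And>x. x \<in> S \<Longrightarrow> norm x \<le> B" using assms bounded_iff by blast
  define N where "N = nat \<lceil>B\<rceil> + 1"
  have "\<bar>k$i\<bar> \<le> real N" if meets: "S \<inter> (+) k ` unit_cube \<noteq> {}" for k :: "real^'n" and i
  proof -
    obtain c where c: "c \<in> unit_cube" "k + c \<in> S" using meets by auto
    have "\<bar>(k + c)$i\<bar> \<le> B" using B[OF c(2)] component_le_norm_cart order_trans by blast
    moreover have "0 \<le> c$i" "c$i \<le> 1" using c(1) by (auto simp: mem_unit_cube)
    ultimately show ?thesis unfolding N_def by (simp add: abs_le_iff) linarith
  qed
  then have "{k \<in> int_lattice. S \<inter> (+) k ` unit_cube \<noteq> {}} \<subseteq> {k \<in> int_lattice. \<forall>i. \<bar>k$i\<bar> \<le> real N}"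
    by auto
  then show ?thesis using finite_lattice_box by (rule finite_subset)
qed

lemma negligible_translates_unit_cube_inter:
  assumes "k \<in> int_lattice" "k' \<in> int_lattice" "k \<noteq> k'"
  shows "negligible ((+) k ` unit_cube \<inter> (+) k' ` unit_cube :: (real^'n) set)"
  unfolding translates_inter
  using assms by (intro negligible_translation negligible_unit_cube_inter_translate int_lattice_diff) auto

lemma union_inter_lattice_translates_unit_cube:
  fixes S :: "(real^'n) set"
  shows "S = (\<Union>k\<in>{k \<in> int_lattice. S \<inter> (+) k ` unit_cube \<noteq> {}}. S \<inter> (+) k ` unit_cube)"
proof
  show "S \<subseteq> (\<Union>k\<in>{k \<in> int_lattice. S \<inter> (+) k ` unit_cube \<noteq> {}}. S \<inter> (+) k ` unit_cube)"
  proof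
    fix x :: "real^'n" assume "x \<in> S"
    moreover have "x \<in> (+) (lattice_floor x) ` unit_cube"
      using imageI[OF diff_lattice_floor_in_unit_cube, of "(+) (lattice_floor x)" x] by simp
    ultimately have "x \<in> S \<inter> (+) (lattice_floor x) ` unit_cube" by (rule IntI)
    moreover have "lattice_floor x \<in> {k \<in> int_lattice. S \<inter> (+) k ` unit_cube \<noteq> {}}"
      using calculation lattice_floor_in_int_lattice by auto
    ultimately show "x \<in> (\<Union>k\<in>{k \<in> int_lattice. S \<inter> (+) k ` unit_cube \<noteq> {}}. S \<inter> (+) k ` unit_cube)"
      by (rule UN_I[rotated])
  qed
qed auto

lemma unit_cube_eq_union_inter_translates:
  fixes S :: "(real^'n) set"
  assumes "\<And>x. \<exists>k\<in>int_lattice. x - k \<in> S"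
  shows "unit_cube = (\<Union>k\<in>{k \<in> int_lattice. S \<inter> (+) k ` unit_cube \<noteq> {}}. unit_cube \<inter> (+) (-k) ` S)"
proof
  show "unit_cube \<subseteq> (\<Union>k\<in>{k \<in> int_lattice. S \<inter> (+) k ` unit_cube \<noteq> {}}. unit_cube \<inter> (+) (-k) ` S)"
  proof
    fix z :: "real^'n" assume z: "z \<in> unit_cube"
    obtain m where m: "m \<in> int_lattice" "z - m \<in> S" using assms by blast
    have "z - m \<in> (+) (-m) ` unit_cube" using imageI[OF z, of "(+) (-m)"] by simp
    with m have "-m \<in> {k \<in> int_lattice. S \<inter> (+) k ` unit_cube \<noteq> {}}"
      using int_lattice_uminus by auto
    moreover have "z \<in> unit_cube \<inter> (+) (- (-m)) ` S"
      using z imageI[OF m(2), of "(+) m"] by simp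
    ultimately show "z \<in> (\<Union>k\<in>{k \<in> int_lattice. S \<inter> (+) k ` unit_cube \<noteq> {}}. unit_cube \<inter> (+) (-k) ` S)"
      by (rule UN_I)
  qed
qed auto

text \<open>A compact set whose lattice translates cover the space with negligible overlaps
  is a fundamental domain: cutting it along the lattice translates of the unit cube and
  moving each piece back into the cube reassembles the cube.\<close>

lemma integral_periodic_fundamental_domain:
  fixes f :: "real^'m::{finite,wellorder} \<Rightarrow> real"
  assumes f: "continuous_on UNIV f" "Zn_periodic f"
    and S: "compact S"
    and cover: "\<And>x. \<exists>k\<in>int_lattice. x - k \<in> S"
    and overlap: "\<And>m. m \<in> int_lattice \<Longrightarrow> m \<noteq> 0 \<Longrightarrow> negligible (S \<inter> (+) m ` S)"
  shows "integral S f = integral unit_cube f"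
proof -
  let ?C = "unit_cube :: (real^'m::{finite,wellorder}) set"
  define K where "K = {k \<in> int_lattice. S \<inter> (+) k ` ?C \<noteq> {}}"
  define A where "A k = S \<inter> (+) k ` ?C" for k
  define A' where "A' k = ?C \<inter> (+) (-k) ` S" for k
  have K: "finite K" "K \<subseteq> int_lattice"
    unfolding K_def using finite_lattice_translates_meeting[OF compact_imp_bounded[OF S]] by auto
  have compact: "compact (A k)" "compact (A' k)" for k
    unfolding A_def A'_def by (intro compact_Int S compact_translation compact_unit_cube)+
  have negligible_A: "pairwise (\<lambda>k k'. negligible (A k \<inter> A k')) K"
  proof (rule pairwiseI)
    fix k k' assume "k \<in> K" "k' \<in> K" "k \<noteq> k'"
    then have "negligible ((+) k ` ?C \<inter> (+) k' ` ?C)"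
      using K(2) by (intro negligible_translates_unit_cube_inter) auto
    then show "negligible (A k \<inter> A k')" unfolding A_def by (rule negligible_subset) auto
  qed
  have "S = (\<Union>k\<in>K. A k)"
    unfolding A_def K_def by (rule union_inter_lattice_translates_unit_cube)
  moreover have "(f has_integral (\<Sum>k\<in>K. integral (A k) f)) (\<Union>k\<in>K. A k)"
    by (rule has_integral_UN[OF K(1) continuous_has_integral_compact[OF f(1) compact(1)] negligible_A])
  ultimately have integral_S: "(f has_integral (\<Sum>k\<in>K. integral (A k) f)) S" by simp
  have negligible_A': "pairwise (\<lambda>k k'. negligible (A' k \<inter> A' k')) K"
  proof (rule pairwiseI)
    fix k k' assume "k \<in> K" "k' \<in> K" "k \<noteq> k'"
    then have "negligible ((+) (-k) ` S \<inter> (+) (-k') ` S)"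
      unfolding translates_inter using K(2)
      by (intro negligible_translation overlap int_lattice_diff int_lattice_uminus) auto
    then show "negligible (A' k \<inter> A' k')" unfolding A'_def by (rule negligible_subset) auto
  qed
  have "?C = (\<Union>k\<in>K. A' k)"
    unfolding A'_def K_def by (rule unit_cube_eq_union_inter_translates[OF cover])
  moreover have "(f has_integral (\<Sum>k\<in>K. integral (A' k) f)) (\<Union>k\<in>K. A' k)"
    by (rule has_integral_UN[OF K(1) continuous_has_integral_compact[OF f(1) compact(2)] negligible_A'])
  ultimately have integral_C: "(f has_integral (\<Sum>k\<in>K. integral (A' k) f)) ?C" by simp
  have "integral (A k) f = integral (A' k) f" if "k \<in> K" for k
  proof -
    have "f (k + x) = f x" for x using Zn_periodicD[OF f(2)] K(2) that by (metis add.commute subsetD)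
    moreover have "A k = (+) k ` A' k"
      unfolding A_def A'_def by (rule translate_inter_translate[symmetric])
    ultimately show ?thesis using integral_translation_image[OF f(1) compact(2)] by simp
  qed
  then have "(\<Sum>k\<in>K. integral (A k) f) = (\<Sum>k\<in>K. integral (A' k) f)" by (rule sum.cong[OF refl])
  with integral_S integral_C show ?thesis by (simp add: integral_unique)
qed

section \<open>Change of variables on the torus\<close>

text \<open>The change of variables theorem of the library is stated for index types that are
  wellorders. A finite index type is transported to its copy \<open>'a wo\<close>, which carries a wellorder
  pulled back from \<^const>\<open>to_nat\<close>.\<close>

typedef 'a wo = "UNIV :: 'a set" morphisms Rep_wo Abs_wo by auto

declare Rep_wo_inverse [simp] Abs_wo_inverse [OF UNIV_I, simp]

lemma inv_Rep_wo: "inv Rep_wo = Abs_wo"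
  by (rule inv_equality) simp_all

lemma range_Rep_wo [simp]: "range Rep_wo = UNIV"
  by (metis Abs_wo_inverse UNIV_I surjI)

lemma bij_Rep_wo: "bij Rep_wo"
  by (metis Rep_wo_inverse Abs_wo_inverse UNIV_I bij_betw_byWitness subset_UNIV)

lemma bij_Abs_wo: "bij Abs_wo"
  by (metis Rep_wo_inverse Abs_wo_inverse UNIV_I bij_betw_byWitness subset_UNIV)

instance wo :: (finite) finite
  by standard (metis bij_Abs_wo bij_is_surj finite finite_imageI)

instantiation wo :: (finite) linorder
begin

definition less_eq_wo :: "'a wo \<Rightarrow> 'a wo \<Rightarrow> bool" where
  "less_eq_wo x y \<longleftrightarrow> to_nat (Rep_wo x) \<le> to_nat (Rep_wo y)"

definition less_wo :: "'a wo \<Rightarrow> 'a wo \<Rightarrow> bool" where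
  "less_wo x y \<longleftrightarrow> to_nat (Rep_wo x) < to_nat (Rep_wo y)"

instance
proof
  fix x y :: "'a wo"
  show "x \<le> y \<Longrightarrow> y \<le> x \<Longrightarrow> x = y"
    unfolding less_eq_wo_def by (metis Rep_wo_inject antisym inj_eq inj_to_nat)
qed (auto simp: less_eq_wo_def less_wo_def)

end

instance wo :: (finite) wellorder
proof
  fix P :: "'a wo \<Rightarrow> bool" and a :: "'a wo"
  assume step: "\<And>x. (\<And>y. y < x \<Longrightarrow> P y) \<Longrightarrow> P x"
  show "P a"
    by (induct a rule: measure_induct_rule[where f="\<lambda>x. to_nat (Rep_wo x)"])
      (rule step, simp add: less_wo_def)
qed

definition vec_to_wo :: "real^'n \<Rightarrow> real^'n wo" where
  "vec_to_wo x = (\<chi> i. x $ Rep_wo i)"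

definition vec_of_wo :: "real^'n wo \<Rightarrow> real^'n" where
  "vec_of_wo y = (\<chi> j. y $ Abs_wo j)"

lemma vec_of_wo_to_wo [simp]: "vec_of_wo (vec_to_wo x) = x"
  and vec_to_wo_of_wo [simp]: "vec_to_wo (vec_of_wo y) = y"
  and vec_to_wo_nth [simp]: "vec_to_wo x $ i = x $ Rep_wo i"
  and vec_of_wo_nth [simp]: "vec_of_wo y $ j = y $ Abs_wo j"
  by (simp_all add: vec_of_wo_def vec_to_wo_def vec_eq_iff)

lemma vec_of_wo_add: "vec_of_wo (x + y) = vec_of_wo x + vec_of_wo y"
  by (simp add: vec_eq_iff)

lemma bounded_linear_vec_to_wo: "bounded_linear vec_to_wo"
  and bounded_linear_vec_of_wo: "bounded_linear vec_of_wo"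
  by (auto intro!: linearI simp: vec_eq_iff linear_conv_bounded_linear[symmetric])

lemma vec_of_wo_in_int_lattice: "k \<in> int_lattice \<Longrightarrow> vec_of_wo k \<in> int_lattice"
  by (simp add: int_lattice_def)

lemma mem_image_vec_of_wo: "x \<in> vec_of_wo ` A \<longleftrightarrow> vec_to_wo x \<in> A"
  and mem_image_vec_to_wo: "y \<in> vec_to_wo ` B \<longleftrightarrow> vec_of_wo y \<in> B"
  by (force intro: image_eqI[rotated])+

lemma image_vec_of_wo_cbox: "vec_of_wo ` cbox u v = cbox (vec_of_wo u) (vec_of_wo v)"
proof -
  have "x \<in> vec_of_wo ` cbox u v \<longleftrightarrow> (\<forall>i. u$i \<le> x $ Rep_wo i \<and> x $ Rep_wo i \<le> v$i)" for x
    by (simp add: mem_image_vec_of_wo mem_box_cart)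
  also have "\<dots> x \<longleftrightarrow> (\<forall>j. u $ Abs_wo j \<le> x $ j \<and> x $ j \<le> v $ Abs_wo j)" for x
    by (metis Rep_wo_inverse Abs_wo_inverse UNIV_I)
  finally show ?thesis by (auto simp: mem_box_cart)
qed

lemma image_vec_to_wo_cbox: "vec_to_wo ` cbox u v = cbox (vec_to_wo u) (vec_to_wo v)"
proof -
  have "y \<in> vec_to_wo ` cbox u v \<longleftrightarrow> (\<forall>i. u$i \<le> y $ Abs_wo i \<and> y $ Abs_wo i \<le> v$i)" for y
    by (simp add: mem_image_vec_to_wo mem_box_cart)
  also have "\<dots> y \<longleftrightarrow> (\<forall>j. u $ Rep_wo j \<le> y $ j \<and> y $ j \<le> v $ Rep_wo j)" for y
    by (metis Rep_wo_inverse Abs_wo_inverse UNIV_I)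
  finally show ?thesis by (auto simp: mem_box_cart)
qed

lemma content_image_vec_of_wo_cbox:
  "measure lborel (vec_of_wo ` cbox u v) = measure lborel (cbox u v)"
proof (cases "cbox u v = {}")
  case False
  then have "cbox (vec_of_wo u) (vec_of_wo v) \<noteq> {}" by (metis image_is_empty image_vec_of_wo_cbox)
  then have "measure lborel (vec_of_wo ` cbox u v) = (\<Prod>j\<in>UNIV. v $ Abs_wo j - u $ Abs_wo j)"
    unfolding image_vec_of_wo_cbox by (simp add: content_cbox_cart)
  also have "\<dots> = (\<Prod>i\<in>UNIV. v $ i - u $ i)"
    using prod.reindex_bij_betw[OF bij_Abs_wo, of "\<lambda>i. v $ i - u $ i"] by simp
  finally show ?thesis using False by (simp add: content_cbox_cart)
qed simp

lemma integral_unit_cube_vec_of_wo: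
  fixes h :: "real^'n \<Rightarrow> real"
  assumes "h integrable_on unit_cube"
  shows "integral unit_cube (\<lambda>y. h (vec_of_wo y)) = integral unit_cube h"
proof -
  have "vec_to_wo (0::real^'n) = 0" "vec_to_wo (One::real^'n) = One"
    unfolding vec_eq_iff vec_to_wo_nth One_nth_cart zero_index by simp_all
  then have cube: "vec_to_wo ` cbox 0 One = (cbox 0 One :: (real^'n wo) set)"
    unfolding image_vec_to_wo_cbox by simp
  have "((\<lambda>y. h (vec_of_wo y)) has_integral (1 / 1) *\<^sub>R integral unit_cube h) (vec_to_wo ` cbox 0 One)"
  proof (rule has_integral_twiddle[where g=vec_of_wo and h=vec_to_wo])
    show "continuous (at x) vec_of_wo" for x
      using bounded_linear_vec_of_wo linear_continuous_at by blast
    show "\<exists>w z. vec_of_wo ` cbox u v = cbox w z" for u v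
      using image_vec_of_wo_cbox by blast
    show "\<exists>w z. vec_to_wo ` cbox u v = cbox w z" for u v
      using image_vec_to_wo_cbox by blast
    show "measure lborel (vec_of_wo ` cbox u v) = 1 * measure lborel (cbox u v)" for u v
      using content_image_vec_of_wo_cbox by simp
    show "(h has_integral integral unit_cube h) (cbox 0 One)"
      using assms unfolding unit_cube_def by (simp add: integrable_integral)
  qed auto
  then show ?thesis unfolding cube unit_cube_def by (simp add: integral_unique)
qed

lemma sign_conj_Rep_wo:
  assumes "p permutes (UNIV :: 'a::finite wo set)"
  shows "sign (Rep_wo \<circ> p \<circ> Abs_wo) = sign p"
proof -
  have "map_permutation UNIV Rep_wo p = Rep_wo \<circ> p \<circ> Abs_wo"
    by (simp add: map_permutation_def restrict_id_def inv_Rep_wo fun_eq_iff)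
  then show ?thesis
    using sign_map_permutation[OF bij_is_inj[OF bij_Rep_wo] assms] by simp
qed

lemma det_reindex_wo:
  fixes A :: "real^'n::finite^'n"
  shows "det (\<chi> (i::'n wo) (j::'n wo). A $ Rep_wo i $ Rep_wo j) = det A"
proof -
  let ?conj = "\<lambda>p::'n wo \<Rightarrow> 'n wo. Rep_wo \<circ> p \<circ> Abs_wo"
  have bij: "bij_betw ?conj {p. p permutes UNIV} {q. q permutes UNIV}"
  proof (rule bij_betw_byWitness[where f'="\<lambda>q. Abs_wo \<circ> q \<circ> Rep_wo"])
    show "?conj ` {p. p permutes UNIV} \<subseteq> {q. q permutes UNIV}"
      "(\<lambda>q. Abs_wo \<circ> q \<circ> Rep_wo) ` {q. q permutes UNIV} \<subseteq> {p. p permutes UNIV}"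
      using bij_Rep_wo bij_Abs_wo by (auto intro!: bij_imp_permutes bij_comp dest: permutes_bij)
  qed (auto simp: fun_eq_iff)
  have "det (\<chi> i j. A $ Rep_wo i $ Rep_wo j)
      = (\<Sum>p | p permutes (UNIV :: 'n wo set). of_int (sign (?conj p)) * (\<Prod>j\<in>UNIV. A $ j $ ?conj p j))"
    unfolding det_def
  proof (rule sum.cong, simp)
    fix p :: "'n wo \<Rightarrow> 'n wo" assume "p \<in> {p. p permutes UNIV}"
    then have "sign (?conj p) = sign p" by (simp add: sign_conj_Rep_wo)
    then show "of_int (sign p) * (\<Prod>i\<in>UNIV. (\<chi> i j. A $ Rep_wo i $ Rep_wo j) $ i $ p i)
        = of_int (sign (?conj p)) * (\<Prod>j\<in>UNIV. A $ j $ ?conj p j)"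
      using prod.reindex_bij_betw[OF bij_Rep_wo, of "\<lambda>j. A $ j $ ?conj p j"]
      by simp
  qed
  also have "\<dots> = det A"
    unfolding det_def
    using sum.reindex_bij_betw[OF bij, of "\<lambda>q. of_int (sign q) * (\<Prod>j\<in>UNIV. A $ j $ q j)"] by simp
  finally show ?thesis .
qed

lemma has_derivative_conj_vec_of_wo:
  assumes "(g has_derivative (\<lambda>v. M *v v)) (at (vec_of_wo y))"
  shows "((\<lambda>y. vec_to_wo (g (vec_of_wo y))) has_derivative
      (\<lambda>v. (\<chi> i j. M $ Rep_wo i $ Rep_wo j) *v v)) (at y)"
proof -
  have "((\<lambda>y. g (vec_of_wo y)) has_derivative (\<lambda>v. M *v vec_of_wo v)) (at y)"
    using bounded_linear_imp_has_derivative[OF bounded_linear_vec_of_wo] assms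
    by (rule has_derivative_compose)
  then have "((\<lambda>y. vec_to_wo (g (vec_of_wo y))) has_derivative (\<lambda>v. vec_to_wo (M *v vec_of_wo v))) (at y)"
    using bounded_linear_imp_has_derivative[OF bounded_linear_vec_to_wo]
    by (rule has_derivative_compose)
  moreover have "vec_to_wo (M *v vec_of_wo v) = (\<chi> i j. M $ Rep_wo i $ Rep_wo j) *v v" for v
  proof -
    have "(\<Sum>j\<in>UNIV. M $ Rep_wo i $ j * v $ Abs_wo j) = (\<Sum>k\<in>UNIV. M $ Rep_wo i $ Rep_wo k * v $ k)" for i
      using sum.reindex_bij_betw[OF bij_Rep_wo, of "\<lambda>j. M $ Rep_wo i $ j * v $ Abs_wo j"] by simp
    then show ?thesis by (simp add: vec_eq_iff matrix_vector_mult_def)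
  qed
  ultimately show ?thesis by simp
qed

lemma lattice_translate_into_equivariant_image:
  fixes g :: "real^'n \<Rightarrow> real^'n"
  assumes "surj g" and equivariant: "\<And>x k. k \<in> int_lattice \<Longrightarrow> g (x + k) = g x + k"
  shows "\<exists>k\<in>int_lattice. x - k \<in> g ` unit_cube"
proof -
  obtain y where y: "x = g y" using assms(1) by (metis surjD)
  have "x - lattice_floor y = g (y - lattice_floor y)"
    using equivariant[OF lattice_floor_in_int_lattice, of "y - lattice_floor y" y] y by simp
  also have "\<dots> \<in> g ` unit_cube" using diff_lattice_floor_in_unit_cube by (rule imageI)
  finally show ?thesis by (rule bexI[OF _ lattice_floor_in_int_lattice])
qed

lemma negligible_equivariant_image_inter_translate:
  fixes g :: "real^'n \<Rightarrow> real^'n"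
  assumes der: "\<And>x. (g has_derivative g' x) (at x)" and "inj g"
    and equivariant: "\<And>x k. k \<in> int_lattice \<Longrightarrow> g (x + k) = g x + k"
    and m: "m \<in> int_lattice" "m \<noteq> 0"
  shows "negligible (g ` unit_cube \<inter> (+) m ` g ` unit_cube)"
proof -
  let ?C = "unit_cube :: (real^'n) set"
  have "g ` ?C \<inter> (+) m ` g ` ?C \<subseteq> g ` (?C \<inter> (+) m ` ?C)"
  proof
    fix x assume "x \<in> g ` ?C \<inter> (+) m ` g ` ?C"
    then obtain a b where ab: "a \<in> ?C" "b \<in> ?C" "x = g a" "x = m + g b" by auto
    have "g (b + m) = g a" using equivariant[OF m(1), of b] ab by (simp add: algebra_simps)
    then have a: "a = b + m" using \<open>inj g\<close> by (simp add: inj_eq)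
    have "a \<in> (+) m ` ?C" unfolding a using ab(2) by (simp add: add.commute)
    then have "a \<in> ?C \<inter> (+) m ` ?C" using ab(1) by (rule IntI[rotated])
    then show "x \<in> g ` (?C \<inter> (+) m ` ?C)" unfolding ab(3) by (rule imageI)
  qed
  moreover have "negligible (g ` (?C \<inter> (+) m ` ?C))"
  proof (rule negligible_differentiable_image_negligible[OF order_refl])
    show "negligible (?C \<inter> (+) m ` ?C)" by (rule negligible_unit_cube_inter_translate[OF m])
    show "g differentiable_on ?C \<inter> (+) m ` ?C"
      using der by (meson differentiable_at_imp_differentiable_on differentiableI)
  qed
  ultimately show ?thesis by (rule negligible_subset[rotated])
qed

text \<open>Lattice-equivariant diffeomorphisms of \<open>\<real>\<^sup>d\<close> descend to the torus; the cube is a fundamental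
  domain for the lattice, and so is its image under such a map.\<close>

lemma integral_periodic_change_of_variables_wellorder:
  fixes f :: "real^'m::{finite,wellorder} \<Rightarrow> real"
  assumes f: "continuous_on UNIV f" "Zn_periodic f"
    and der: "\<And>x. (g has_derivative (\<lambda>v. M x *v v)) (at x)"
    and bij: "bij g"
    and equivariant: "\<And>x k. k \<in> int_lattice \<Longrightarrow> g (x + k) = g x + k"
  shows "integral unit_cube (\<lambda>x. \<bar>det (M x)\<bar> * f (g x)) = integral unit_cube f"
proof -
  let ?C = "unit_cube :: (real^'m::{finite,wellorder}) set"
  have "continuous_on UNIV g"
    using der has_derivative_continuous continuous_at_imp_continuous_on by blast
  then have compact_image: "compact (g ` ?C)"
    by (rule compact_continuous_image[OF continuous_on_subset compact_unit_cube]) simp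
  have "integral (g ` ?C) f = integral ?C f"
    using lattice_translate_into_equivariant_image[OF bij_is_surj[OF bij] equivariant]
      negligible_equivariant_image_inter_translate[OF der bij_is_inj[OF bij] equivariant]
    by (intro integral_periodic_fundamental_domain[OF f compact_image])
  moreover have "integral ?C (\<lambda>x. \<bar>det (matrix (\<lambda>v. M x *v v))\<bar> * f (g x)) = integral (g ` ?C) f"
  proof (rule integral_change_of_variables_real)
    show "?C \<in> sets lebesgue" by (rule fmeasurableD[OF lmeasurable_compact[OF compact_unit_cube]])
    show "(g has_derivative (\<lambda>v. M x *v v)) (at x within ?C)" for x
      using der by (rule has_derivative_at_withinI)
    show "inj_on g ?C" using bij_is_inj[OF bij] by (rule inj_on_subset) simp
    show "f absolutely_integrable_on g ` ?C"
      by (rule continuous_absolutely_integrable_on_compact[OF f(1) compact_image])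
  qed
  ultimately show ?thesis by simp
qed

lemma integral_periodic_change_of_variables:
  fixes f :: "real^'n \<Rightarrow> real"
  assumes f: "continuous_on UNIV f" "Zn_periodic f"
    and der: "\<And>x. (g has_derivative (\<lambda>v. M x *v v)) (at x)"
    and bij: "bij g"
    and equivariant: "\<And>x k. k \<in> int_lattice \<Longrightarrow> g (x + k) = g x + k"
    and det_continuous: "continuous_on UNIV (\<lambda>x. det (M x))"
  shows "integral unit_cube (\<lambda>x. \<bar>det (M x)\<bar> * f (g x)) = integral unit_cube f"
proof -
  define f' where "f' y = f (vec_of_wo y)" for y
  define g' where "g' y = vec_to_wo (g (vec_of_wo y))" for y
  define M' where "M' y = (\<chi> i j. M (vec_of_wo y) $ Rep_wo i $ Rep_wo j)" for y
  have continuous_g: "continuous_on UNIV g"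
    using der has_derivative_continuous continuous_at_imp_continuous_on by blast
  have transferred: "integral unit_cube (\<lambda>y. \<bar>det (M' y)\<bar> * f' (g' y)) = integral unit_cube f'"
  proof (rule integral_periodic_change_of_variables_wellorder)
    show "continuous_on UNIV f'" unfolding f'_def
      by (rule continuous_on_compose2[OF f(1) linear_continuous_on[OF bounded_linear_vec_of_wo]]) auto
    show "Zn_periodic f'"
      unfolding f'_def
      by (intro Zn_periodicI) (simp add: vec_of_wo_add Zn_periodicD[OF f(2)] vec_of_wo_in_int_lattice)
    show "(g' has_derivative (\<lambda>v. M' x *v v)) (at x)" for x
      unfolding g'_def M'_def by (rule has_derivative_conj_vec_of_wo[OF der])
    show "bij g'"
      unfolding g'_def by (rule o_bij[where g="\<lambda>y. vec_to_wo (inv g (vec_of_wo y))"])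
        (simp_all add: fun_eq_iff inv_f_f[OF bij_is_inj[OF bij]] surj_f_inv_f[OF bij_is_surj[OF bij]])
    show "g' (x + k) = g' x + k" if "k \<in> int_lattice" for x k
      unfolding g'_def using equivariant[OF vec_of_wo_in_int_lattice[OF that]]
      by (simp add: vec_of_wo_add vec_eq_iff)
  qed
  have integrable: "(\<lambda>x. \<bar>det (M x)\<bar> * f (g x)) integrable_on unit_cube"
    unfolding unit_cube_def
    by (rule integrable_continuous, rule continuous_on_subset[of UNIV])
      (auto intro!: continuous_intros det_continuous continuous_on_compose2[OF f(1) continuous_g])
  have "integral unit_cube (\<lambda>x. \<bar>det (M x)\<bar> * f (g x))
      = integral unit_cube (\<lambda>y. \<bar>det (M (vec_of_wo y))\<bar> * f (g (vec_of_wo y)))"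
    using integral_unit_cube_vec_of_wo[OF integrable] by simp
  also have "\<dots> = integral unit_cube f'"
    using transferred unfolding M'_def f'_def g'_def det_reindex_wo by simp
  also have "\<dots> = integral unit_cube f"
    unfolding f'_def using f(1) unfolding unit_cube_def
    by (intro integral_unit_cube_vec_of_wo[unfolded unit_cube_def] integrable_continuous
        continuous_on_subset[OF f(1)]) auto
  finally show ?thesis .
qed

lemma integral_periodic_translate:
  fixes f :: "real^'n \<Rightarrow> real"
  assumes "continuous_on UNIV f" "Zn_periodic f"
  shows "integral unit_cube (\<lambda>x. f (x + a)) = integral unit_cube f"
proof -
  have "bij (\<lambda>x::real^'n. x + a)"
    by (rule o_bij[where g="\<lambda>x. x - a"]) (auto simp: fun_eq_iff)
  then have "integral unit_cube (\<lambda>x. \<bar>det (mat 1 :: real^'n^'n)\<bar> * f (x + a)) = integral unit_cube f"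
    by (intro integral_periodic_change_of_variables assms) (auto intro!: derivative_eq_intros)
  then show ?thesis by simp
qed

section \<open>Derivatives of smooth periodic functions\<close>

lemma smooth_Rn_differentiable: "smooth_Rn f \<Longrightarrow> f differentiable (at x)"
  by (auto elim: smooth_Rn.cases)

lemma smooth_Rn_frechet_derivative: "smooth_Rn f \<Longrightarrow> smooth_Rn (\<lambda>x. frechet_derivative f (at x) v)"
  by (auto elim: smooth_Rn.cases)

lemma smooth_Rn_has_derivative: "smooth_Rn f \<Longrightarrow> (f has_derivative frechet_derivative f (at x)) (at x)"
  using smooth_Rn_differentiable frechet_derivative_works by blast

lemma differentiable_imp_continuous_on_UNIV: "(\<And>x. f differentiable (at x)) \<Longrightarrow> continuous_on UNIV f"
  by (simp add: continuous_at_imp_continuous_on differentiable_imp_continuous_within)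

lemma smooth_Rn_continuous_on: "smooth_Rn f \<Longrightarrow> continuous_on UNIV f"
  using smooth_Rn_differentiable differentiable_imp_continuous_on_UNIV by blast

lemma smooth_Rn_continuous_on_frechet_derivative:
  "smooth_Rn f \<Longrightarrow> continuous_on UNIV (\<lambda>x. frechet_derivative f (at x) v)"
  using smooth_Rn_frechet_derivative smooth_Rn_continuous_on by blast

lemma Zn_periodic_comp: "Zn_periodic f \<Longrightarrow> Zn_periodic (\<lambda>x. g (f x))"
  by (simp add: Zn_periodic_def)

lemma Zn_periodic_frechet_derivative:
  fixes f :: "real^'n \<Rightarrow> real"
  assumes "\<And>x. f differentiable (at x)" "Zn_periodic f"
  shows "Zn_periodic (\<lambda>x. frechet_derivative f (at x))"
proof (rule Zn_periodicI)
  fix x k :: "real^'n" assume k: "k \<in> int_lattice"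
  have "((\<lambda>y. y + k) has_derivative (\<lambda>h. h)) (at x)" by (auto intro!: derivative_eq_intros)
  from has_derivative_compose[OF this frechet_derivative_works[THEN iffD1, OF assms(1)[of "x + k"]]]
  have "((\<lambda>y. f (y + k)) has_derivative frechet_derivative f (at (x + k))) (at x)" by simp
  moreover have "(\<lambda>y. f (y + k)) = f" using Zn_periodicD[OF assms(2) k] by auto
  ultimately show "frechet_derivative f (at (x + k)) = frechet_derivative f (at x)"
    using frechet_derivative_at by metis
qed

lemma has_real_derivative_along_line:
  assumes "\<And>y. (F has_derivative DF y) (at y)"
  shows "((\<lambda>s. F (x + s *\<^sub>R e)) has_real_derivative DF (x + s *\<^sub>R e) e) (at s)"
proof -
  have "((\<lambda>s. x + s *\<^sub>R e) has_derivative (\<lambda>h. h *\<^sub>R e)) (at s)"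
    by (auto intro!: derivative_eq_intros)
  from has_derivative_compose[OF this assms]
  have "((\<lambda>s. F (x + s *\<^sub>R e)) has_derivative (\<lambda>h. DF (x + s *\<^sub>R e) (h *\<^sub>R e))) (at s)" .
  moreover have "(\<lambda>h. DF (x + s *\<^sub>R e) (h *\<^sub>R e)) = (*) (DF (x + s *\<^sub>R e) e)"
    using linear_scale[OF has_derivative_linear[OF assms]] by (simp add: fun_eq_iff mult.commute)
  ultimately show ?thesis by (simp add: has_field_derivative_def)
qed

lemma difference_quotient_bounded:
  assumes "\<And>y. (F has_derivative DF y) (at y)" and "\<And>y. \<bar>DF y e\<bar> \<le> B" and "t > 0"
  shows "\<bar>(F (x + t *\<^sub>R e) - F x) / t\<bar> \<le> B"
proof -
  have "continuous_on {0..t} (\<lambda>s. F (x + s *\<^sub>R e))"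
    using has_real_derivative_along_line[OF assms(1)]
    by (meson DERIV_continuous continuous_at_imp_continuous_on)
  moreover have "(\<lambda>s. F (x + s *\<^sub>R e)) differentiable (at s)" for s
    using has_real_derivative_along_line[OF assms(1)] real_differentiable_def by blast
  ultimately obtain l z where lz: "DERIV (\<lambda>s. F (x + s *\<^sub>R e)) z :> l"
      "F (x + t *\<^sub>R e) - F (x + 0 *\<^sub>R e) = (t - 0) * l"
    using MVT[OF assms(3)] by blast
  have "l = DF (x + z *\<^sub>R e) e"
    using DERIV_unique[OF lz(1) has_real_derivative_along_line[OF assms(1)]] .
  then show ?thesis using lz(2) assms(2,3) by simp
qed

lemma has_integral_unit_cube_periodic_difference:
  fixes F :: "real^'n \<Rightarrow> real"
  assumes "continuous_on UNIV F" "Zn_periodic F"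
  shows "((\<lambda>x. (F (x + a) - F x) / t) has_integral 0) unit_cube"
proof -
  have "continuous_on UNIV (\<lambda>x. F (x + a))"
    by (rule continuous_on_compose2[OF assms(1)]) (auto intro!: continuous_intros)
  then have "((\<lambda>x. F (x + a) - F x) has_integral
      integral unit_cube (\<lambda>x. F (x + a)) - integral unit_cube F) unit_cube"
    by (intro has_integral_diff continuous_has_integral_unit_cube assms(1))
  then have "((\<lambda>x. F (x + a) - F x) has_integral 0) unit_cube"
    by (simp add: integral_periodic_translate[OF assms])
  from has_integral_mult_left[OF this, of "inverse t"] show ?thesis
    by (simp add: divide_inverse)
qed

lemma difference_quotient_sequence_tendsto:
  fixes F :: "'a::real_normed_vector \<Rightarrow> real"
  assumes "((\<lambda>s. F (x + s *\<^sub>R e)) has_real_derivative D) (at 0)"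
  shows "(\<lambda>n. (F (x + inverse (real (Suc n)) *\<^sub>R e) - F x) / inverse (real (Suc n))) \<longlonglongrightarrow> D"
proof -
  have "F (x + 0 *\<^sub>R e) = F x" by simp
  with assms have "((\<lambda>s. (F (x + s *\<^sub>R e) - F x) / s) \<longlongrightarrow> D) (at 0)"
    unfolding has_field_derivative_iff by simp
  moreover have "filterlim (\<lambda>n. inverse (real (Suc n))) (at 0) sequentially"
    unfolding filterlim_at using LIMSEQ_inverse_real_of_nat by auto
  ultimately show ?thesis by (rule filterlim_compose)
qed

text \<open>The difference quotients in direction \<open>e\<close> have integral \<open>0\<close> over the cube by translation
  invariance, and converge boundedly to the derivative.\<close>

lemma integral_unit_cube_periodic_derivative:
  fixes F :: "real^'n \<Rightarrow> real"
  assumes differentiable: "\<And>x. F differentiable (at x)" and periodic: "Zn_periodic F"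
    and continuous: "continuous_on UNIV (\<lambda>x. frechet_derivative F (at x) e)"
  shows "integral unit_cube (\<lambda>x. frechet_derivative F (at x) e) = 0"
proof -
  define G where "G x = frechet_derivative F (at x) e" for x
  define h where "h n x = (F (x + inverse (real (Suc n)) *\<^sub>R e) - F x) / inverse (real (Suc n))" for n x
  have F': "\<And>y. (F has_derivative frechet_derivative F (at y)) (at y)"
    using differentiable frechet_derivative_works by blast
  have "Zn_periodic (\<lambda>x. frechet_derivative F (at x) e)"
    by (rule Zn_periodic_comp[OF Zn_periodic_frechet_derivative[OF differentiable periodic]])
  then obtain B where B: "\<And>x. \<bar>G x\<bar> \<le> B"
    unfolding G_def using periodic_continuous_bounded[OF continuous] by blast
  have h_integral: "(h n has_integral 0) unit_cube" for n
    unfolding h_def[abs_def] using differentiable_imp_continuous_on_UNIV[OF differentiable] periodic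
    by (rule has_integral_unit_cube_periodic_difference)
  have "(\<lambda>n. h n x) \<longlonglongrightarrow> G x" for x
    unfolding h_def G_def
    using has_real_derivative_along_line[OF F', of x e 0] by (intro difference_quotient_sequence_tendsto) simp
  moreover have "norm (h n x) \<le> B" for n x
    using B[unfolded G_def] unfolding h_def real_norm_def
    by (rule difference_quotient_bounded[OF F']) simp
  ultimately have "(\<lambda>n. integral unit_cube (h n)) \<longlonglongrightarrow> integral unit_cube G"
  proof (intro dominated_convergence(2)[where h="\<lambda>x. B"])
    show "h n integrable_on unit_cube" for n using h_integral by blast
    show "(\<lambda>x. B) integrable_on unit_cube"
      unfolding unit_cube_def by (rule integrable_continuous) (rule continuous_on_const)
  qed simp_all
  moreover have "integral unit_cube (h n) = 0" for n using h_integral by blast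
  ultimately have "(\<lambda>n. 0) \<longlonglongrightarrow> integral unit_cube G" by simp
  then have "0 = integral unit_cube G" by (rule LIMSEQ_unique[OF tendsto_const])
  then show ?thesis unfolding G_def by simp
qed

lemma grad_nth: "grad f x $ i = frechet_derivative f (at x) (axis i 1)"
  by (simp add: grad_def)

lemma hess_nth: "hess f x $ i $ j = frechet_derivative (\<lambda>y. grad f y $ i) (at x) (axis j 1)"
  by (simp add: hess_def)

lemma frechet_derivative_axis_expansion:
  assumes "f differentiable (at x)"
  shows "frechet_derivative f (at x) (v::real^'n) = (\<Sum>j\<in>UNIV. v $ j * frechet_derivative f (at x) (axis j 1))"
proof -
  have "linear (frechet_derivative f (at x))"
    using assms frechet_derivative_works has_derivative_linear by blast
  moreover have "v = (\<Sum>j\<in>UNIV. v $ j *\<^sub>R axis j 1)"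
    by (simp add: vec_eq_iff axis_def sum_component if_distrib cong: if_cong)
  then have "frechet_derivative f (at x) v = frechet_derivative f (at x) (\<Sum>j\<in>UNIV. v $ j *\<^sub>R axis j 1)"
    by simp
  ultimately show ?thesis by (simp add: linear_sum linear_scale)
qed

lemma grad_has_derivative_hess:
  fixes f :: "real^'n \<Rightarrow> real"
  assumes "\<And>i. (\<lambda>y. grad f y $ i) differentiable (at x)"
  shows "(grad f has_derivative (\<lambda>v. hess f x *v v)) (at x)"
proof -
  have "((\<lambda>y. grad f y \<bullet> b) has_derivative (\<lambda>v. (hess f x *v v) \<bullet> b)) (at x)" if b: "b \<in> Basis" for b
  proof -
    obtain i where i: "b = axis i 1" using b by (auto simp: Basis_vec_def)
    have "frechet_derivative (\<lambda>y. grad f y $ i) (at x) v = (hess f x *v v) $ i" for v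
      by (subst frechet_derivative_axis_expansion[OF assms])
        (simp add: matrix_vector_mult_def hess_nth mult.commute)
    then have "frechet_derivative (\<lambda>y. grad f y $ i) (at x) = (\<lambda>v. (hess f x *v v) $ i)" ..
    moreover have "((\<lambda>y. grad f y $ i) has_derivative frechet_derivative (\<lambda>y. grad f y $ i) (at x)) (at x)"
      using assms frechet_derivative_works by blast
    ultimately have "((\<lambda>y. grad f y $ i) has_derivative (\<lambda>v. (hess f x *v v) $ i)) (at x)"
      by (simp only:)
    then show ?thesis unfolding i cart_eq_inner_axis[symmetric] .
  qed
  then show ?thesis by (subst has_derivative_componentwise_within) (rule ballI)
qed

lemma continuous_on_grad_nth: "smooth_Rn f \<Longrightarrow> continuous_on UNIV (\<lambda>x. grad f x $ i)"
  unfolding grad_nth by (rule smooth_Rn_continuous_on_frechet_derivative)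

lemma continuous_on_hess_nth: "smooth_Rn f \<Longrightarrow> continuous_on UNIV (\<lambda>x. hess f x $ i $ j)"
  unfolding hess_nth grad_nth by (intro smooth_Rn_continuous_on_frechet_derivative smooth_Rn_frechet_derivative)

text \<open>The integrand is the partial derivative \<open>\<partial>\<^sub>i (q\<^sup>2 \<partial>\<^sub>i\<phi> / 2)\<close> of a periodic function.\<close>

lemma integral_unit_cube_partial_half_square:
  fixes q \<phi> :: "real^'n \<Rightarrow> real"
  assumes q: "smooth_Rn q" "Zn_periodic q" and \<phi>: "smooth_Rn \<phi>" "Zn_periodic \<phi>"
  shows "((\<lambda>x. q x * grad q x $ i * grad \<phi> x $ i + (q x)^2 * hess \<phi> x $ i $ i / 2) has_integral 0) unit_cube"
proof -
  define \<psi> where "\<psi> y = grad \<phi> y $ i" for y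
  define F where "F x = (q x)^2 * \<psi> x / 2" for x
  have \<psi>: "smooth_Rn \<psi>" unfolding \<psi>_def grad_nth using smooth_Rn_frechet_derivative[OF \<phi>(1)] .
  have F': "(F has_derivative (\<lambda>v. q x * frechet_derivative q (at x) v * \<psi> x
      + (q x)^2 * frechet_derivative \<psi> (at x) v / 2)) (at x)" for x
    unfolding F_def[abs_def]
    by (auto intro!: derivative_eq_intros smooth_Rn_has_derivative q(1) \<psi>
        simp: fun_eq_iff algebra_simps power2_eq_square)
  then have partial_F: "frechet_derivative F (at x) (axis i 1)
      = q x * grad q x $ i * grad \<phi> x $ i + (q x)^2 * hess \<phi> x $ i $ i / 2" for x
    unfolding frechet_derivative_at[OF F'[of x], symmetric] by (simp add: \<psi>_def[abs_def] grad_nth hess_nth)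
  have continuous: "continuous_on UNIV (\<lambda>x. q x * grad q x $ i * grad \<phi> x $ i + (q x)^2 * hess \<phi> x $ i $ i / 2)"
  proof -
    define a b c where "a x = grad q x $ i" and "b x = grad \<phi> x $ i" and "c x = hess \<phi> x $ i $ i" for x
    have "continuous_on UNIV a" "continuous_on UNIV b" "continuous_on UNIV c"
      unfolding a_def[abs_def] b_def[abs_def] c_def[abs_def]
      by (simp_all add: continuous_on_grad_nth q(1) \<phi>(1) continuous_on_hess_nth)
    then have "continuous_on UNIV (\<lambda>x. q x * a x * b x + (q x)^2 * c x / 2)"
      by (intro continuous_intros smooth_Rn_continuous_on[OF q(1)]) auto
    then show ?thesis unfolding a_def b_def c_def .
  qed
  have "Zn_periodic \<psi>"
    unfolding \<psi>_def grad_nth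
    by (rule Zn_periodic_comp[OF Zn_periodic_frechet_derivative[OF smooth_Rn_differentiable[OF \<phi>(1)] \<phi>(2)]])
  then have "Zn_periodic F"
    using q(2) unfolding F_def Zn_periodic_iff by simp
  then have "integral unit_cube (\<lambda>x. frechet_derivative F (at x) (axis i 1)) = 0"
    using F' continuous unfolding partial_F[symmetric]
    by (intro integral_unit_cube_periodic_derivative) (auto simp: differentiable_def)
  then show ?thesis using continuous_has_integral_unit_cube[OF continuous] by (simp add: partial_F)
qed

lemma integral_unit_cube_grad_inner_laplacian:
  fixes q \<phi> :: "real^'n \<Rightarrow> real"
  assumes "smooth_Rn q" "Zn_periodic q" "smooth_Rn \<phi>" "Zn_periodic \<phi>"
  shows "((\<lambda>x. (grad q x \<bullet> grad \<phi> x) * q x + (q x)^2 * laplacian \<phi> x / 2) has_integral 0) unit_cube"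
proof -
  have "((\<lambda>x. \<Sum>i\<in>UNIV. q x * grad q x $ i * grad \<phi> x $ i + (q x)^2 * hess \<phi> x $ i $ i / 2)
      has_integral (\<Sum>i\<in>(UNIV::'n set). 0)) unit_cube"
    by (intro has_integral_sum integral_unit_cube_partial_half_square assms) simp
  moreover have "(\<Sum>i\<in>UNIV. q x * grad q x $ i * grad \<phi> x $ i + (q x)^2 * hess \<phi> x $ i $ i / 2)
      = (grad q x \<bullet> grad \<phi> x) * q x + (q x)^2 * laplacian \<phi> x / 2" for x
    by (simp add: sum.distrib inner_vec_def laplacian_def sum_distrib_left sum_distrib_right
        sum_divide_distrib algebra_simps)
  ultimately show ?thesis by simp
qed

section \<open>The Brenier potential\<close>

definition brenier_potential :: "(real^'n \<Rightarrow> real) \<Rightarrow> real^'n \<Rightarrow> real" where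
  "brenier_potential \<phi> y = norm y ^ 2 / 2 + \<phi> y"

lemma brenier_potential_eq: "brenier_potential \<phi> = (\<lambda>y. norm y ^ 2 / 2 + \<phi> y)"
  by (simp add: fun_eq_iff brenier_potential_def)

lemma has_derivative_half_norm_square: "((\<lambda>y. norm y ^ 2 / 2) has_derivative (\<lambda>v. y \<bullet> v)) (at y)"
proof -
  have "((\<lambda>y. y \<bullet> y / 2) has_derivative (\<lambda>v. (v \<bullet> y + y \<bullet> v) / 2)) (at y)"
    by (auto intro!: derivative_eq_intros)
  moreover have "(\<lambda>v. (v \<bullet> y + y \<bullet> v) / 2) = (\<lambda>v. y \<bullet> v)" by (auto simp: inner_commute)
  ultimately show ?thesis by (simp add: power2_norm_eq_inner)
qed

lemma inj_if_derivative_pos_def: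
  fixes g :: "real^'n \<Rightarrow> real^'n"
  assumes der: "\<And>x. (g has_derivative (\<lambda>v. M x *v v)) (at x)"
    and pos_def: "\<And>x v. v \<noteq> 0 \<Longrightarrow> 0 < v \<bullet> (M x *v v)"
  shows "inj g"
proof (rule injI, rule ccontr)
  fix a b assume eq: "g a = g b" and "a \<noteq> b"
  define v where "v = a - b"
  define h where "h t = g (b + t *\<^sub>R v) \<bullet> v" for t
  have "v \<noteq> 0" using \<open>a \<noteq> b\<close> by (simp add: v_def)
  have h': "(h has_real_derivative v \<bullet> (M (b + t *\<^sub>R v) *v v)) (at t)" for t
  proof -
    have "((\<lambda>t. b + t *\<^sub>R v) has_derivative (\<lambda>s. s *\<^sub>R v)) (at t)"
      by (auto intro!: derivative_eq_intros)
    from has_derivative_inner_left[OF has_derivative_compose[OF this der]]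
    have "(h has_derivative (\<lambda>s. (M (b + t *\<^sub>R v) *v (s *\<^sub>R v)) \<bullet> v)) (at t)"
      unfolding h_def .
    moreover have "(\<lambda>s. (M (b + t *\<^sub>R v) *v (s *\<^sub>R v)) \<bullet> v) = (*) (v \<bullet> (M (b + t *\<^sub>R v) *v v))"
      by (auto simp: fun_eq_iff matrix_vector_mult_scaleR inner_commute)
    ultimately show ?thesis by (simp add: has_field_derivative_def)
  qed
  then have "continuous_on {0..1} h"
    by (meson DERIV_continuous continuous_at_imp_continuous_on)
  then obtain l z where lz: "DERIV h z :> l" "h 1 - h 0 = (1 - 0) * l"
    using MVT[of 0 1 h] h' real_differentiable_def by force
  have "l = v \<bullet> (M (b + z *\<^sub>R v) *v v)" using DERIV_unique[OF lz(1) h'] .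
  then have "l > 0" using pos_def[OF \<open>v \<noteq> 0\<close>] by simp
  moreover have "h 1 = h 0" unfolding h_def v_def using eq by simp
  ultimately show False using lz(2) by simp
qed

lemma continuous_attains_global_min:
  fixes F :: "'a::euclidean_space \<Rightarrow> real"
  assumes "continuous_on UNIV F" and "R \<ge> 0" and "\<And>x. norm x \<ge> R \<Longrightarrow> F x > F 0"
  obtains x0 where "\<And>y. F x0 \<le> F y"
proof -
  obtain x0 where x0: "x0 \<in> cball 0 R" "\<And>y. y \<in> cball 0 R \<Longrightarrow> F x0 \<le> F y"
    using continuous_attains_inf[OF compact_cball _ continuous_on_subset[OF assms(1)], of 0 R] assms(2)
    by auto
  have "F x0 \<le> F y" for y
  proof (cases "norm y \<le> R")
    case False
    then have "F 0 < F y" using assms(3) by simp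
    moreover have "F x0 \<le> F 0" using x0(2)[of 0] assms(2) by simp
    ultimately show ?thesis by simp
  qed (use x0 in simp)
  then show ?thesis using that by blast
qed

context
  fixes \<phi> :: "real^'n \<Rightarrow> real"
  assumes smooth: "smooth_Rn \<phi>"
begin

lemma brenier_potential_has_derivative:
  "(brenier_potential \<phi> has_derivative (\<lambda>v. y \<bullet> v + frechet_derivative \<phi> (at y) v)) (at y)"
  unfolding brenier_potential_def[abs_def]
  by (intro has_derivative_add has_derivative_half_norm_square smooth_Rn_has_derivative[OF smooth])

lemma frechet_derivative_brenier_potential:
  "frechet_derivative (brenier_potential \<phi>) (at y) = (\<lambda>v. y \<bullet> v + frechet_derivative \<phi> (at y) v)"
  using frechet_derivative_at[OF brenier_potential_has_derivative] by simp

lemma grad_brenier_potential: "grad (brenier_potential \<phi>) y = y + grad \<phi> y"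
  by (simp add: vec_eq_iff grad_nth frechet_derivative_brenier_potential inner_axis)

lemma hess_brenier_potential: "hess (brenier_potential \<phi>) x = mat 1 + hess \<phi> x"
proof -
  have "((\<lambda>y. grad (brenier_potential \<phi>) y $ i) has_derivative
      (\<lambda>v. v $ i + frechet_derivative (\<lambda>y. grad \<phi> y $ i) (at x) v)) (at x)" for i
    unfolding grad_brenier_potential vector_add_component grad_nth
    by (intro has_derivative_add bounded_linear_imp_has_derivative bounded_linear_vec_nth
        smooth_Rn_has_derivative smooth_Rn_frechet_derivative[OF smooth])
  then have "frechet_derivative (\<lambda>y. grad (brenier_potential \<phi>) y $ i) (at x)
      = (\<lambda>v. v $ i + frechet_derivative (\<lambda>y. grad \<phi> y $ i) (at x) v)" for i
    by (rule sym[OF frechet_derivative_at])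
  then show ?thesis by (simp add: vec_eq_iff hess_nth mat_def axis_def)
qed

lemma laplacian_brenier_potential: "laplacian (brenier_potential \<phi>) x = real CARD('n) + laplacian \<phi> x"
  unfolding laplacian_def hess_brenier_potential by (simp add: sum.distrib mat_def)

lemma grad_brenier_potential_has_derivative:
  "(grad (brenier_potential \<phi>) has_derivative (\<lambda>v. hess (brenier_potential \<phi>) x *v v)) (at x)"
proof (rule grad_has_derivative_hess)
  fix i
  show "(\<lambda>y. grad (brenier_potential \<phi>) y $ i) differentiable (at x)"
    unfolding grad_brenier_potential vector_add_component grad_nth
    using smooth_Rn_differentiable[OF smooth_Rn_frechet_derivative[OF smooth]]
    by (intro differentiable_add) (auto intro: bounded_linear_imp_differentiable bounded_linear_vec_nth)
qed

lemma surj_grad_brenier_potential: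
  assumes periodic: "Zn_periodic \<phi>"
  shows "surj (grad (brenier_potential \<phi>))"
proof -
  obtain B where B: "\<And>x. \<bar>\<phi> x\<bar> \<le> B"
    using periodic_continuous_bounded[OF smooth_Rn_continuous_on[OF smooth] periodic] by blast
  have "y0 \<in> range (grad (brenier_potential \<phi>))" for y0
  proof -
    define \<Psi> where "\<Psi> x = brenier_potential \<phi> x - y0 \<bullet> x" for x
    have \<Psi>': "(\<Psi> has_derivative (\<lambda>v. x \<bullet> v + frechet_derivative \<phi> (at x) v - y0 \<bullet> v)) (at x)" for x
      unfolding \<Psi>_def[abs_def]
      by (intro has_derivative_diff brenier_potential_has_derivative) (auto intro!: derivative_eq_intros)
    have "continuous_on UNIV \<Psi>"
      using \<Psi>' by (meson differentiableI differentiable_imp_continuous_on_UNIV)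
    moreover have "\<Psi> x > \<Psi> 0" if "norm x \<ge> 2 * norm y0 + 2 * B + 2" for x
    proof -
      have "B \<ge> 0" using B[of 0] by simp
      have "norm x \<ge> 2" using that \<open>B \<ge> 0\<close> norm_ge_zero[of y0] by linarith
      moreover have "norm x / 2 - norm y0 \<ge> B + 1" using that by linarith
      ultimately have "2 * (B + 1) \<le> norm x * (norm x / 2 - norm y0)"
        using mult_mono[of 2 "norm x" "B + 1" "norm x / 2 - norm y0"] \<open>B \<ge> 0\<close> by simp
      moreover have "y0 \<bullet> x \<le> norm y0 * norm x" using norm_cauchy_schwarz .
      ultimately have "norm x ^ 2 / 2 + \<phi> x - y0 \<bullet> x > \<phi> 0"
        using B[of x] B[of 0] by (simp add: power2_eq_square algebra_simps)
      then show ?thesis unfolding \<Psi>_def brenier_potential_def by simp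
    qed
    ultimately obtain x0 where "\<And>y. \<Psi> x0 \<le> \<Psi> y"
      using continuous_attains_global_min[of \<Psi> "2 * norm y0 + 2 * B + 2"] B[of 0] by force
    then have "(\<lambda>v. x0 \<bullet> v + frechet_derivative \<phi> (at x0) v - y0 \<bullet> v) = (\<lambda>h. 0)"
      by (intro has_derivative_local_min[OF \<Psi>']) auto
    then have "x0 $ i + grad \<phi> x0 $ i - y0 $ i = 0" for i
      unfolding grad_nth by (metis inner_axis real_inner_1_right)
    then have "grad (brenier_potential \<phi>) x0 = y0"
      by (simp add: vec_eq_iff grad_brenier_potential)
    then show ?thesis by blast
  qed
  then show ?thesis by blast
qed

lemma grad_brenier_potential_add_lattice:
  assumes "Zn_periodic \<phi>" "k \<in> int_lattice"
  shows "grad (brenier_potential \<phi>) (x + k) = grad (brenier_potential \<phi>) x + k"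
proof -
  have "Zn_periodic (grad \<phi>)"
    unfolding grad_def
    using Zn_periodic_frechet_derivative[OF smooth_Rn_differentiable[OF smooth] assms(1)]
    by (simp add: Zn_periodic_iff)
  then show ?thesis using assms(2) by (simp add: grad_brenier_potential Zn_periodicD)
qed

end

lemma continuous_on_inner_grad:
  assumes "smooth_Rn f" "smooth_Rn g"
  shows "continuous_on UNIV (\<lambda>x. grad f x \<bullet> grad g x)"
proof -
  have "continuous_on UNIV (\<lambda>x. \<Sum>i\<in>UNIV. grad f x $ i * grad g x $ i)"
    by (intro continuous_on_sum continuous_on_mult continuous_on_grad_nth assms)
  then show ?thesis by (simp add: inner_vec_def)
qed

lemma torus_densityD:
  assumes "torus_density p"
  shows "smooth_Rn p" "Zn_periodic p" "\<And>x. 0 < p x" "continuous_on UNIV p"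
  using assms smooth_Rn_continuous_on unfolding torus_density_def by auto

context
  fixes p q \<phi> :: "real^'n \<Rightarrow> real"
  assumes p: "torus_density p" and q: "torus_density q"
    and \<phi>: "smooth_Rn \<phi>" "Zn_periodic \<phi>"
    and pos_def: "\<And>x v. v \<noteq> 0 \<Longrightarrow> 0 < v \<bullet> (hess (brenier_potential \<phi>) x *v v)"
    and monge_ampere: "\<And>x. p (grad (brenier_potential \<phi>) x) * det (hess (brenier_potential \<phi>) x) = q x"
begin

lemma det_hess_brenier_potential_eq: "det (hess (brenier_potential \<phi>) x) = q x / p (grad (brenier_potential \<phi>) x)"
proof -
  have "p (grad (brenier_potential \<phi>) x) > 0" by (rule torus_densityD(3)[OF p])
  with monge_ampere[of x] show ?thesis by (simp add: eq_divide_eq mult.commute)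
qed

lemma det_hess_brenier_potential_pos: "det (hess (brenier_potential \<phi>) x) > 0"
  unfolding det_hess_brenier_potential_eq using torus_densityD(3)[OF p] torus_densityD(3)[OF q] by simp

lemma continuous_on_det_hess_brenier_potential: "continuous_on UNIV (\<lambda>x. det (hess (brenier_potential \<phi>) x))"
proof -
  have "continuous_on UNIV (grad (brenier_potential \<phi>))"
    using grad_brenier_potential_has_derivative[OF \<phi>(1)]
    by (meson continuous_at_imp_continuous_on has_derivative_continuous)
  then have "continuous_on UNIV (\<lambda>x. p (grad (brenier_potential \<phi>) x))"
    by (rule continuous_on_compose2[OF torus_densityD(4)[OF p]]) simp
  moreover have "p y \<noteq> 0" for y using torus_densityD(3)[OF p, of y] by simp
  ultimately show ?thesis
    unfolding det_hess_brenier_potential_eq using torus_densityD(4)[OF q]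
    by (intro continuous_on_divide) auto
qed

lemma U_torus_eq_integral_over_det:
  "U_torus p = integral unit_cube (\<lambda>x. (q x)^2 / det (hess (brenier_potential \<phi>) x) / 2)"
proof -
  let ?g = "grad (brenier_potential \<phi>)" and ?H = "hess (brenier_potential \<phi>)"
  have "integral unit_cube (\<lambda>x. \<bar>det (?H x)\<bar> * (\<lambda>y. (p y)^2 / 2) (?g x))
      = integral unit_cube (\<lambda>y. (p y)^2 / 2)"
  proof (rule integral_periodic_change_of_variables)
    show "continuous_on UNIV (\<lambda>y. (p y)^2 / 2)"
      using torus_densityD(4)[OF p] by (intro continuous_intros) auto
    show "Zn_periodic (\<lambda>y. (p y)^2 / 2)" by (rule Zn_periodic_comp[OF torus_densityD(2)[OF p]])
    show "(?g has_derivative (\<lambda>v. ?H x *v v)) (at x)" for x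
      by (rule grad_brenier_potential_has_derivative[OF \<phi>(1)])
    show "bij ?g"
      using inj_if_derivative_pos_def[OF grad_brenier_potential_has_derivative[OF \<phi>(1)] pos_def]
        surj_grad_brenier_potential[OF \<phi>] by (rule bijI)
    show "?g (x + k) = ?g x + k" if "k \<in> int_lattice" for x k
      by (rule grad_brenier_potential_add_lattice[OF \<phi> that])
  qed (rule continuous_on_det_hess_brenier_potential)
  moreover have "\<bar>det (?H x)\<bar> * (p (?g x))^2 / 2 = (q x)^2 / det (?H x) / 2" for x
    using monge_ampere[of x, symmetric] det_hess_brenier_potential_pos[of x]
    by (simp add: power2_eq_square field_simps)
  ultimately show ?thesis unfolding U_torus_def by simp
qed

theorem transport_bregman_torus_U:
  "transport_bregman_torus U_torus (\<lambda>r. r) p q (grad (brenier_potential \<phi>))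
     = 1/2 * integral unit_cube (\<lambda>x. (laplacian (brenier_potential \<phi>) x
          + 1 / det (hess (brenier_potential \<phi>) x) - 1 - real CARD('n)) * (q x)^2)"
proof -
  let ?D = "\<lambda>x. det (hess (brenier_potential \<phi>) x)"
  let ?I1 = "integral unit_cube (\<lambda>x. (q x)^2 / ?D x / 2)"
  let ?I2 = "integral unit_cube (\<lambda>x. (q x)^2 / 2)"
  let ?I3 = "integral unit_cube (\<lambda>x. (grad q x \<bullet> grad \<phi> x) * q x)"
  note q' = torus_densityD[OF q]
  have D_nonzero: "?D x \<noteq> 0" for x using det_hess_brenier_potential_pos[of x] by simp
  then have "continuous_on UNIV (\<lambda>x. (q x)^2 / ?D x / 2)"
    by (intro continuous_on_divide continuous_on_power q'(4) continuous_on_det_hess_brenier_potential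
        continuous_on_const) auto
  note I1 = continuous_has_integral_unit_cube[OF this]
  have "continuous_on UNIV (\<lambda>x. (q x)^2 / 2)"
    using q'(4) by (intro continuous_intros) auto
  note I2 = continuous_has_integral_unit_cube[OF this]
  have "continuous_on UNIV (\<lambda>x. (grad q x \<bullet> grad \<phi> x) * q x)"
    by (intro continuous_on_mult continuous_on_inner_grad q'(1,4) \<phi>(1))
  note I3 = continuous_has_integral_unit_cube[OF this]
  note I4 = integral_unit_cube_grad_inner_laplacian[OF q'(1,2) \<phi>]
  have "((\<lambda>x. 2 * ((q x)^2 / ?D x / 2) - 2 * ((q x)^2 / 2) - 2 * ((grad q x \<bullet> grad \<phi> x) * q x)
        + 2 * ((grad q x \<bullet> grad \<phi> x) * q x + (q x)^2 * laplacian \<phi> x / 2))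
      has_integral (2 * ?I1 - 2 * ?I2 - 2 * ?I3 + 2 * 0)) unit_cube"
    by (intro has_integral_add has_integral_diff has_integral_mult_right I1 I2 I3 I4)
  also have "(\<lambda>x. 2 * ((q x)^2 / ?D x / 2) - 2 * ((q x)^2 / 2) - 2 * ((grad q x \<bullet> grad \<phi> x) * q x)
        + 2 * ((grad q x \<bullet> grad \<phi> x) * q x + (q x)^2 * laplacian \<phi> x / 2))
      = (\<lambda>x. (laplacian (brenier_potential \<phi>) x + 1 / ?D x - 1 - real CARD('n)) * (q x)^2)"
    using D_nonzero by (simp add: fun_eq_iff laplacian_brenier_potential[OF \<phi>(1)] field_simps)
  finally have "integral unit_cube (\<lambda>x. (laplacian (brenier_potential \<phi>) x + 1 / ?D x - 1
      - real CARD('n)) * (q x)^2) = 2 * ?I1 - 2 * ?I2 - 2 * ?I3"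
    by (simp add: integral_unique)
  moreover have "transport_bregman_torus U_torus (\<lambda>r. r) p q (grad (brenier_potential \<phi>)) = ?I1 - ?I2 - ?I3"
    unfolding transport_bregman_torus_def U_torus_eq_integral_over_det
    by (simp add: grad_brenier_potential[OF \<phi>(1)] U_torus_def)
  ultimately show ?thesis by simp
qed

end

section \<open>The transport Bregman divergence of \<open>U\<close> on the unit interval\<close>

lemma smooth_on_real_differentiable: "smooth_on_real S f \<Longrightarrow> x \<in> S \<Longrightarrow> f differentiable (at x within S)"
  by (auto elim: smooth_on_real.cases)

lemma smooth_on_real_vector_derivative:
  "smooth_on_real S f \<Longrightarrow> smooth_on_real S (\<lambda>x. vector_derivative f (at x within S))"
  by (auto elim: smooth_on_real.cases)

lemma smooth_on_real_continuous_on: "smooth_on_real S f \<Longrightarrow> continuous_on S f"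
  by (simp add: continuous_on_eq_continuous_within differentiable_imp_continuous_within
      smooth_on_real_differentiable)

lemma at_within_unit_interval: "x \<in> {0<..<1::real} \<Longrightarrow> at x within {0..1} = at x"
  by (intro at_within_interior) simp

lemma smooth_on_real_has_real_derivative:
  assumes "smooth_on_real {0..1} f" "x \<in> {0<..<1::real}"
  shows "(f has_real_derivative vector_derivative f (at x within {0..1})) (at x)"
proof -
  have "(f has_vector_derivative vector_derivative f (at x within {0..1})) (at x within {0..1})"
    using assms by (intro vector_derivative_works[THEN iffD1] smooth_on_real_differentiable) auto
  then show ?thesis
    using assms(2) by (simp add: at_within_unit_interval has_real_derivative_iff_has_vector_derivative)
qed

lemma vector_derivative_within_unit_interval:
  assumes "(f has_real_derivative d) (at x)" "x \<in> {0<..<1::real}"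
  shows "vector_derivative f (at x within {0..1}) = d"
  using assms by (simp add: at_within_unit_interval has_real_derivative_iff_has_vector_derivative
      vector_derivative_at)

lemma has_integral_substitution_unit_interval:
  fixes h g g' :: "real \<Rightarrow> real"
  assumes h: "continuous_on {0..1} h" and g: "continuous_on {0..1} g" "g ` {0..1} \<subseteq> {0..1}"
    and ends: "g 0 = 0" "g 1 = 1"
    and g': "\<And>x. x \<in> {0<..<1} \<Longrightarrow> g x \<in> {0<..<1} \<and> (g has_real_derivative g' x) (at x)"
  shows "((\<lambda>x. h (g x) * g' x) has_integral integral {0..1} h) {0..1}"
proof -
  define H where "H y = integral {0..y} h" for y
  have H': "(H has_real_derivative h y) (at y within {0..1})" if "y \<in> {0..1}" for y
    unfolding H_def[abs_def] using integral_has_real_derivative[OF h that] .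
  then have continuous: "continuous_on {0..1} (H \<circ> g)"
    by (intro continuous_on_compose g(1) continuous_on_subset[OF _ g(2)])
      (meson DERIV_continuous continuous_on_eq_continuous_within)
  have derivative: "((H \<circ> g) has_vector_derivative h (g x) * g' x) (at x)" if "x \<in> {0<..<1}" for x
  proof -
    have "(H has_real_derivative h (g x)) (at (g x))"
      using H'[of "g x"] g'[OF that] by (simp add: at_within_unit_interval)
    from DERIV_chain2[OF this conjunct2[OF g'[OF that]]] show ?thesis
      by (simp add: has_real_derivative_iff_has_vector_derivative o_def)
  qed
  have "((\<lambda>x. h (g x) * g' x) has_integral ((H \<circ> g) 1 - (H \<circ> g) 0)) {0..1}"
    by (rule fundamental_theorem_of_calculus_interior[OF _ continuous derivative]) auto
  then show ?thesis using ends by (simp add: H_def)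
qed

context
  fixes p :: "real \<Rightarrow> real"
  assumes density: "interval_density p"
begin

lemma interval_density_continuous_on: "continuous_on {0..1} p"
  using density smooth_on_real_continuous_on unfolding interval_density_def by blast

lemma interval_density_pos: "x \<in> {0..1} \<Longrightarrow> 0 < p x"
  using density unfolding interval_density_def by blast

lemma cdf_has_real_derivative_within: "x \<in> {0..1} \<Longrightarrow> (cdf p has_real_derivative p x) (at x within {0..1})"
  unfolding cdf_def[abs_def] using integral_has_real_derivative[OF interval_density_continuous_on] by blast

lemma cdf_has_real_derivative: "x \<in> {0<..<1} \<Longrightarrow> (cdf p has_real_derivative p x) (at x)"
  using cdf_has_real_derivative_within[of x] by (simp add: at_within_unit_interval)

lemma continuous_on_cdf: "continuous_on {0..1} (cdf p)"
  using cdf_has_real_derivative_within by (meson DERIV_continuous continuous_on_eq_continuous_within)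

lemma cdf_0: "cdf p 0 = 0"
  by (simp add: cdf_def)

lemma cdf_1: "cdf p 1 = 1"
  using density by (simp add: cdf_def interval_density_def)

lemma cdf_strict_mono:
  assumes "0 \<le> x" "x < y" "y \<le> 1"
  shows "cdf p x < cdf p y"
proof -
  have "continuous_on {x..y} (cdf p)" using continuous_on_cdf by (rule continuous_on_subset) (use assms in auto)
  moreover have "cdf p differentiable (at z)" if "x < z" "z < y" for z
    using cdf_has_real_derivative[of z] assms that real_differentiable_def by force
  ultimately obtain l z where z: "x < z" "z < y" "DERIV (cdf p) z :> l" "cdf p y - cdf p x = (y - x) * l"
    using MVT[OF assms(2)] by blast
  have "z \<in> {0<..<1}" using z(1,2) assms by simp
  then have "l = p z" using DERIV_unique[OF z(3) cdf_has_real_derivative] by simp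
  moreover have "p z > 0" using interval_density_pos \<open>z \<in> {0<..<1}\<close> by simp
  ultimately have "(y - x) * l > 0" using z(1,2) by simp
  then show ?thesis using z(4) by linarith
qed

lemma inj_on_cdf: "inj_on (cdf p) {0..1}"
  by (rule inj_onI) (metis atLeastAtMost_iff cdf_strict_mono linorder_neq_iff)

lemma cdf_in_interval: "x \<in> {0..1} \<Longrightarrow> cdf p x \<in> {0..1}"
  using cdf_strict_mono[of 0 x] cdf_strict_mono[of x 1] cdf_0 cdf_1
  by (cases "x = 0"; cases "x = 1") auto

lemma cdf_in_open_interval: "x \<in> {0<..<1} \<Longrightarrow> cdf p x \<in> {0<..<1}"
  using cdf_strict_mono[of 0 x] cdf_strict_mono[of x 1] cdf_0 cdf_1 by auto

lemma cdf_image: "cdf p ` {0..1} = {0..1}"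
proof
  show "{0..1} \<subseteq> cdf p ` {0..1}"
  proof
    fix y :: real assume "y \<in> {0..1}"
    then obtain x where "0 \<le> x" "x \<le> 1" "cdf p x = y"
      using IVT'[of "cdf p" 0 y 1] continuous_on_cdf cdf_0 cdf_1 by auto
    then show "y \<in> cdf p ` {0..1}" by auto
  qed
qed (use cdf_in_interval in auto)

lemma inv_cdf_cdf: "x \<in> {0..1} \<Longrightarrow> inv_cdf p (cdf p x) = x"
  unfolding inv_cdf_def using inj_on_cdf by (simp add: inv_into_f_f)

lemma cdf_inv_cdf: "s \<in> {0..1} \<Longrightarrow> cdf p (inv_cdf p s) = s"
  unfolding inv_cdf_def using cdf_image by (simp add: f_inv_into_f)

lemma inv_cdf_in_interval: "s \<in> {0..1} \<Longrightarrow> inv_cdf p s \<in> {0..1}"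
  unfolding inv_cdf_def using cdf_image by (metis inv_into_into)

lemma inv_cdf_in_open_interval: "s \<in> {0<..<1} \<Longrightarrow> inv_cdf p s \<in> {0<..<1}"
  using inv_cdf_in_interval[of s] cdf_inv_cdf[of s] cdf_0 cdf_1
  by (cases "inv_cdf p s = 0"; cases "inv_cdf p s = 1") auto

lemma continuous_on_inv_cdf: "continuous_on {0..1} (inv_cdf p)"
  using continuous_on_inv[OF continuous_on_cdf compact_Icc] inv_cdf_cdf cdf_image by metis

lemma inv_cdf_has_real_derivative:
  assumes "s \<in> {0<..<1}"
  shows "(inv_cdf p has_real_derivative 1 / p (inv_cdf p s)) (at s)"
proof -
  have "inv_cdf p s \<in> {0<..<1}" using inv_cdf_in_open_interval assms by blast
  then have "DERIV (cdf p) (inv_cdf p s) :> p (inv_cdf p s)" "p (inv_cdf p s) \<noteq> 0"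
    using cdf_has_real_derivative interval_density_pos[of "inv_cdf p s"] by auto
  moreover have "isCont (inv_cdf p) s"
    using continuous_on_inv_cdf assms
    by (simp add: continuous_on_eq_continuous_within at_within_unit_interval[symmetric])
  ultimately have "DERIV (inv_cdf p) s :> inverse (p (inv_cdf p s))"
    using DERIV_inverse_function[where f="cdf p" and a=0 and b=1] assms cdf_inv_cdf by auto
  then show ?thesis by (simp add: inverse_eq_divide)
qed

lemma vector_derivative_inv_cdf:
  "s \<in> {0<..<1} \<Longrightarrow> vector_derivative (inv_cdf p) (at s within {0..1}) = 1 / p (inv_cdf p s)"
  by (rule vector_derivative_within_unit_interval[OF inv_cdf_has_real_derivative])

end

text \<open>Since \<open>(F\<^sub>p\<^sup>-\<^sup>1)' = 1 / p \<circ> F\<^sub>p\<^sup>-\<^sup>1\<close> on \<open>(0, 1)\<close>, this is the integrand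
  \<open>(1 / (F\<^sub>p\<^sup>-\<^sup>1)' - 1 / (F\<^sub>q\<^sup>-\<^sup>1)')\<^sup>2 (F\<^sub>p\<^sup>-\<^sup>1)'\<close> of the theorem.\<close>

definition quantile_discrepancy :: "(real \<Rightarrow> real) \<Rightarrow> (real \<Rightarrow> real) \<Rightarrow> real \<Rightarrow> real" where
  "quantile_discrepancy p q s = (p (inv_cdf p s) - q (inv_cdf q s))^2 / p (inv_cdf p s)"

context
  fixes p q :: "real \<Rightarrow> real"
  assumes p: "interval_density p" and q: "interval_density q"
begin

lemma transport_map_in_interval: "x \<in> {0..1} \<Longrightarrow> inv_cdf p (cdf q x) \<in> {0..1}"
  using inv_cdf_in_interval[OF p] cdf_in_interval[OF q] by blast

lemma transport_map_in_open_interval: "x \<in> {0<..<1} \<Longrightarrow> inv_cdf p (cdf q x) \<in> {0<..<1}"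
  using inv_cdf_in_open_interval[OF p] cdf_in_open_interval[OF q] by blast

lemma continuous_on_transport_map: "continuous_on {0..1} (\<lambda>x. inv_cdf p (cdf q x))"
  by (rule continuous_on_compose2[OF continuous_on_inv_cdf[OF p] continuous_on_cdf[OF q]])
    (use cdf_in_interval[OF q] in auto)

lemma transport_map_0: "inv_cdf p (cdf q 0) = 0"
  and transport_map_1: "inv_cdf p (cdf q 1) = 1"
  using inv_cdf_cdf[OF p, of 0] inv_cdf_cdf[OF p, of 1]
  by (simp_all add: cdf_0[OF p] cdf_0[OF q] cdf_1[OF p] cdf_1[OF q])

lemma transport_map_has_real_derivative:
  assumes "x \<in> {0<..<1}"
  shows "((\<lambda>x. inv_cdf p (cdf q x)) has_real_derivative q x / p (inv_cdf p (cdf q x))) (at x)"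
  using DERIV_chain2[OF inv_cdf_has_real_derivative[OF p cdf_in_open_interval[OF q assms]]
      cdf_has_real_derivative[OF q assms]]
  by simp

lemma U_int_eq_integral_transport:
  "((\<lambda>x. (p (inv_cdf p (cdf q x)))^2 / 2 * (q x / p (inv_cdf p (cdf q x)))) has_integral U_int p) {0..1}"
  unfolding U_int_def
proof (rule has_integral_substitution_unit_interval[where h="\<lambda>y. (p y)^2 / 2"])
  show "continuous_on {0..1} (\<lambda>y. (p y)^2 / 2)"
    using interval_density_continuous_on[OF p] by (intro continuous_intros) auto
qed (use continuous_on_transport_map transport_map_in_interval transport_map_0 transport_map_1
    transport_map_in_open_interval transport_map_has_real_derivative in auto)

lemma transport_integration_by_parts:
  "((\<lambda>x. q x * vector_derivative q (at x within {0..1}) * (inv_cdf p (cdf q x) - x)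
      + (q x)^2 * (q x / p (inv_cdf p (cdf q x)) - 1) / 2) has_integral 0) {0..1}"
proof -
  let ?T = "\<lambda>x. inv_cdf p (cdf q x)"
  define J where "J x = (q x)^2 * (?T x - x) / 2" for x
  have q': "(q has_real_derivative vector_derivative q (at x within {0..1})) (at x)" if "x \<in> {0<..<1}" for x
    using q that unfolding interval_density_def by (blast intro: smooth_on_real_has_real_derivative)
  have "((\<lambda>x. q x * vector_derivative q (at x within {0..1}) * (?T x - x)
      + (q x)^2 * (q x / p (?T x) - 1) / 2) has_integral (J 1 - J 0)) {0..1}"
  proof (rule fundamental_theorem_of_calculus_interior)
    show "continuous_on {0..1} J"
      unfolding J_def[abs_def] using interval_density_continuous_on[OF q] continuous_on_transport_map
      by (intro continuous_intros) auto
    fix x :: real assume x: "x \<in> {0<..<1}"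
    have "(J has_real_derivative q x * vector_derivative q (at x within {0..1}) * (?T x - x)
        + (q x)^2 * (q x / p (?T x) - 1) / 2) (at x)"
      unfolding J_def[abs_def]
      by (rule derivative_eq_intros q'[OF x] transport_map_has_real_derivative[OF x] | simp)+
    then show "(J has_vector_derivative q x * vector_derivative q (at x within {0..1}) * (?T x - x)
        + (q x)^2 * (q x / p (?T x) - 1) / 2) (at x)"
      by (simp add: has_real_derivative_iff_has_vector_derivative)
  qed simp
  then show ?thesis by (simp add: J_def transport_map_0 transport_map_1)
qed

lemma integral_quantile_substitution:
  "((\<lambda>x. quantile_discrepancy p q (cdf q x) * q x) has_integral
      integral {0..1} (quantile_discrepancy p q)) {0..1}"
proof (rule has_integral_substitution_unit_interval)
  have "continuous_on {0..1} (\<lambda>s. f (inv_cdf f s))" if f: "interval_density f" for f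
    by (rule continuous_on_compose2[OF interval_density_continuous_on[OF f] continuous_on_inv_cdf[OF f]])
      (use inv_cdf_in_interval[OF f] in auto)
  moreover have "p (inv_cdf p s) \<noteq> 0" if "s \<in> {0..1}" for s
    using interval_density_pos[OF p inv_cdf_in_interval[OF p that]] by simp
  ultimately show "continuous_on {0..1} (quantile_discrepancy p q)"
    unfolding quantile_discrepancy_def[abs_def] using p q by (intro continuous_intros) auto
qed (use continuous_on_cdf[OF q] cdf_in_interval[OF q] cdf_0[OF q] cdf_1[OF q]
    cdf_in_open_interval[OF q] cdf_has_real_derivative[OF q] in auto)

lemma divergence_integrand_eq_quantile_discrepancy:
  assumes "x \<in> {0..1}"
  shows "(p (inv_cdf p (cdf q x)))^2 / 2 * (q x / p (inv_cdf p (cdf q x))) - (q x)^2 / 2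
      - d * (inv_cdf p (cdf q x) - x) * q x
      + (q x * d * (inv_cdf p (cdf q x) - x) + (q x)^2 * (q x / p (inv_cdf p (cdf q x)) - 1) / 2)
    = 1/2 * (quantile_discrepancy p q (cdf q x) * q x)"
proof -
  have "p (inv_cdf p (cdf q x)) > 0" using assms by (intro interval_density_pos[OF p] transport_map_in_interval)
  then show ?thesis
    using inv_cdf_cdf[OF q assms] unfolding quantile_discrepancy_def by (simp add: field_simps power2_eq_square)
qed

theorem transport_bregman_int_U:
  "transport_bregman_int U_int (\<lambda>r. r) p q (inv_cdf p \<circ> cdf q)
     = 1/2 * integral {0..1}
         (\<lambda>s. (1 / vector_derivative (inv_cdf p) (at s within {0..1})
               - 1 / vector_derivative (inv_cdf q) (at s within {0..1}))^2
              * vector_derivative (inv_cdf p) (at s within {0..1}))"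
proof -
  let ?T = "\<lambda>x. inv_cdf p (cdf q x)" and ?q' = "\<lambda>x. vector_derivative q (at x within {0..1})"
  let ?R = "quantile_discrepancy p q"
  have "continuous_on {0..1} (\<lambda>x. ?q' x * (?T x - x) * q x)"
    using q smooth_on_real_continuous_on[OF smooth_on_real_vector_derivative] interval_density_continuous_on[OF q]
      continuous_on_transport_map
    unfolding interval_density_def by (intro continuous_intros) auto
  note I3 = integrable_integral[OF integrable_continuous_interval[OF this]]
  have "continuous_on {0..1} (\<lambda>x. (q x)^2 / 2)"
    using interval_density_continuous_on[OF q] by (intro continuous_intros) auto
  note I2 = integrable_integral[OF integrable_continuous_interval[OF this], folded U_int_def]
  have integrand_integral: "((\<lambda>x. (p (?T x))^2 / 2 * (q x / p (?T x)) - (q x)^2 / 2 - ?q' x * (?T x - x) * q x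
      + (q x * ?q' x * (?T x - x) + (q x)^2 * (q x / p (?T x) - 1) / 2)) has_integral
      U_int p - U_int q - integral {0..1} (\<lambda>x. ?q' x * (?T x - x) * q x) + 0) {0..1}"
    by (intro has_integral_add has_integral_diff U_int_eq_integral_transport transport_integration_by_parts I2 I3)
  from has_integral_eq[OF divergence_integrand_eq_quantile_discrepancy integrand_integral] have "((\<lambda>x. 1/2 * (?R (cdf q x) * q x)) has_integral
      U_int p - U_int q - integral {0..1} (\<lambda>x. ?q' x * (?T x - x) * q x)) {0..1}"
    by simp
  moreover have "((\<lambda>x. 1/2 * (?R (cdf q x) * q x)) has_integral 1/2 * integral {0..1} ?R) {0..1}"
    by (rule has_integral_mult_right[OF integral_quantile_substitution])
  ultimately have "U_int p - U_int q - integral {0..1} (\<lambda>x. ?q' x * (?T x - x) * q x) = 1/2 * integral {0..1} ?R"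
    by (rule has_integral_unique)
  moreover have "integral {0..1} (\<lambda>s. (1 / vector_derivative (inv_cdf p) (at s within {0..1})
      - 1 / vector_derivative (inv_cdf q) (at s within {0..1}))^2
      * vector_derivative (inv_cdf p) (at s within {0..1})) = integral {0..1} ?R"
    by (rule integral_spike[of "{0,1}"])
      (auto simp: quantile_discrepancy_def vector_derivative_inv_cdf[OF p] vector_derivative_inv_cdf[OF q] divide_inverse)
  ultimately show ?thesis by (simp add: transport_bregman_int_def o_def)
qed

end

theorem mainTheorem7:
  shows
  "(\<forall>(p :: real^'n \<Rightarrow> real) q \<phi>.
      torus_density p \<and> torus_density q \<and> smooth_Rn \<phi> \<and> Zn_periodic \<phi>
      \<and> (\<forall>x. \<forall>v. v \<noteq> 0 \<longrightarrow>
             0 < v \<bullet> (hess (\<lambda>y. norm y ^ 2 / 2 + \<phi> y) x *v v))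
      \<and> (\<forall>x. p (grad (\<lambda>y. norm y ^ 2 / 2 + \<phi> y) x)
                * det (hess (\<lambda>y. norm y ^ 2 / 2 + \<phi> y) x) = q x)
      \<longrightarrow> transport_bregman_torus U_torus (\<lambda>r. r) p q (grad (\<lambda>y. norm y ^ 2 / 2 + \<phi> y))
          = 1/2 * integral unit_cube
              (\<lambda>x. (laplacian (\<lambda>y. norm y ^ 2 / 2 + \<phi> y) x
                    + 1 / det (hess (\<lambda>y. norm y ^ 2 / 2 + \<phi> y) x)
                    - 1 - real CARD('n)) * (q x)^2))
   \<and>
   (\<forall>p q :: real \<Rightarrow> real.
      interval_density p \<and> interval_density q \<longrightarrow>
      transport_bregman_int U_int (\<lambda>r. r) p q (inv_cdf p \<circ> cdf q)
        = 1/2 * integral {0..1}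
            (\<lambda>s. (1 / vector_derivative (inv_cdf p) (at s within {0..1})
                  - 1 / vector_derivative (inv_cdf q) (at s within {0..1}))^2
                 * vector_derivative (inv_cdf p) (at s within {0..1})))"
  using transport_bregman_torus_U[unfolded brenier_potential_eq] transport_bregman_int_U
  by blast

end
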